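(* Let $m\geq1$, let $X$ be a weak complicial set in which every $k$-simplex is thin for every $k\geq m$, and let $x\in X_0$ be a vertex. Then for every $n\geq m$ the homotopy monoid $\tau_n(X,x)$ is a group.
   Context: A stratified simplicial set is a pair $(X,tX)$ where $X$ is a simplicial set and $tX$ is a set of simplices of $X$ (thin simplices) containing all degenerate simplices and no $0$-simplices; stratified maps are simplicial maps preserving thin simplices. A regular stratified subset $(X,tX)\subset(Y,tY)$ means $X\subset Y$, $tX=X\cap tY$. For $n\ge1$, $\Delta[n]_t$ is $\Delta[n]$ with thin simplices the degenerate ones and $\mathrm{Id}_{[n]}$. For $k\in[n]$, $\Delta^k[n]$ is $\Delta[n]$ with thin simplices the degenerate ones and all $\alpha:[m]\to[n]$ with $\{k-1,k,k+1\}\cap[n]\subset\mathrm{Im}(\alpha)$; $\Lambda^k[n]$ is the regular stratified subset of $\Delta^k[n]$ generated by the faces $\delta_i$, $i\neq k$; $\Delta^k[n]''$ (resp. $\Lambda^k[n]'$) is $\Delta^k[n]$ (resp. $\Lambda^k[n]$) with additionally all its $(n-1)$-simplices thin; $\Delta^k[n]'=\Delta^k[n]\cup\Lambda^k[n]'$. A weak complicial set is a stratified simplicial set with the right lifting property against $\Lambda^k[n]\hookrightarrow\Delta^k[n]$ ($n\ge1$, $k\in[n]$) and $\Delta^k[n]'\hookrightarrow\Delta^k[n]''$ ($n\ge2$, $k\in[n]$). The product $X\circledast Y$ has underlying simplicial set $X\times Y$, with $(x,y)$ thin iff $x$ and $y$ are thin. For stratified maps $f,g:A\to X$ and an inclusion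 $B\hookrightarrow A$ with $f|_B=g|_B$, $f\sim_B g$ means there is a stratified map $H:A\circledast\Delta[1]_t\to X$ with $H|_{A\times\{0\}}=f$, $H|_{A\times\{1\}}=g$ and $H|_{B\circledast\Delta[1]_t}=f|_B\circ\mathrm{proj}_B$; $n$-simplices are regarded as stratified maps from $\Delta[n]$ with only degenerate simplices thin. For $n\ge1$, $\tau_n(X,x)$ is the set of $\sim_{\partial\Delta[n]}$-classes of $n$-simplices $\alpha$ whose restriction to $\partial\Delta[n]$ is constant at $x$, with multiplication $[\alpha][\beta]=[d_n\theta]$ where $\theta:\Delta^n[n+1]\to X$ is any stratified map with $d_{n-1}\theta=\alpha$, $d_{n+1}\theta=\beta$, and $d_i\theta$ constant at $x$ for $i\notin\{n-1,n,n+1\}$; this is a monoid with unit the class of the constant simplex at $x$. *)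

theory Defs
  imports "HOL-Algebra.Group"
begin

text \<open>A monotone map [m] -> [n], represented by its values on {..m}.\<close>
definition mono_map :: "nat \<Rightarrow> nat \<Rightarrow> (nat \<Rightarrow> nat) \<Rightarrow> bool" where
  "mono_map m n \<alpha> \<longleftrightarrow> (\<forall>i\<le>m. \<alpha> i \<le> n) \<and> (\<forall>i j. i \<le> j \<longrightarrow> j \<le> m \<longrightarrow> \<alpha> i \<le> \<alpha> j)"

text \<open>Simp X n = set of n-simplices; Act X n m a x = x . a for x an n-simplex and
  a : [m] -> [n] monotone; Thin X n = thin n-simplices.\<close>
record 'a sset =
  Simp :: "nat \<Rightarrow> 'a set"
  Act :: "nat \<Rightarrow> nat \<Rightarrow> (nat \<Rightarrow> nat) \<Rightarrow> 'a \<Rightarrow> 'a"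
  Thin :: "nat \<Rightarrow> 'a set"

definition simplicial_set :: "'a sset \<Rightarrow> bool" where
  "simplicial_set X \<longleftrightarrow>
     (\<forall>n m \<alpha> x. mono_map m n \<alpha> \<longrightarrow> x \<in> Simp X n \<longrightarrow> Act X n m \<alpha> x \<in> Simp X m)
   \<and> (\<forall>n x. x \<in> Simp X n \<longrightarrow> Act X n n (\<lambda>i. i) x = x)
   \<and> (\<forall>n m k \<alpha> \<beta> x. mono_map m n \<alpha> \<longrightarrow> mono_map k m \<beta> \<longrightarrow> x \<in> Simp X n \<longrightarrow>
        Act X m k \<beta> (Act X n m \<alpha> x) = Act X n k (\<alpha> \<circ> \<beta>) x)
   \<and> (\<forall>n m \<alpha> \<beta> x. mono_map m n \<alpha> \<longrightarrow> (\<forall>i\<le>m. \<alpha> i = \<beta> i) \<longrightarrow> x \<in> Simp X n \<longrightarrow>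
        Act X n m \<alpha> x = Act X n m \<beta> x)"

definition degenerate :: "'a sset \<Rightarrow> nat \<Rightarrow> 'a set" where
  "degenerate X m = {Act X k m \<alpha> y | k \<alpha> y. mono_map m k \<alpha> \<and> \<not> inj_on \<alpha> {..m} \<and> y \<in> Simp X k}"

definition stratified :: "'a sset \<Rightarrow> bool" where
  "stratified X \<longleftrightarrow> simplicial_set X
   \<and> (\<forall>n. Thin X n \<subseteq> Simp X n) \<and> Thin X 0 = {}
   \<and> (\<forall>n. degenerate X n \<subseteq> Thin X n)"

definition smap :: "'a sset \<Rightarrow> 'b sset \<Rightarrow> (nat \<Rightarrow> 'a \<Rightarrow> 'b) \<Rightarrow> bool" where
  "smap A X f \<longleftrightarrow>
     (\<forall>n x. x \<in> Simp A n \<longrightarrow> f n x \<in> Simp X n)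
   \<and> (\<forall>n x. x \<in> Thin A n \<longrightarrow> f n x \<in> Thin X n)
   \<and> (\<forall>n m \<alpha> x. mono_map m n \<alpha> \<longrightarrow> x \<in> Simp A n \<longrightarrow> f m (Act A n m \<alpha> x) = Act X n m \<alpha> (f n x))"

text \<open>Right lifting property of X against an inclusion A \<subseteq> B (A a stratified subset
  of B with the same action).\<close>
definition rlp :: "'b sset \<Rightarrow> 'b sset \<Rightarrow> 'a sset \<Rightarrow> bool" where
  "rlp A B X \<longleftrightarrow> (\<forall>f. smap A X f \<longrightarrow>
      (\<exists>g. smap B X g \<and> (\<forall>n y. y \<in> Simp A n \<longrightarrow> g n y = f n y)))"

text \<open>m-simplices of Delta[n]: monotone maps [m] -> [n], normalised to 0 outside {..m}.\<close>
definition dsimp :: "nat \<Rightarrow> nat \<Rightarrow> (nat \<Rightarrow> nat) set" where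
  "dsimp n m = {\<alpha>. mono_map m n \<alpha> \<and> (\<forall>i>m. \<alpha> i = 0)}"

definition dact :: "nat \<Rightarrow> nat \<Rightarrow> (nat \<Rightarrow> nat) \<Rightarrow> (nat \<Rightarrow> nat) \<Rightarrow> (nat \<Rightarrow> nat)" where
  "dact k m \<beta> \<alpha> = (\<lambda>i. if i \<le> m then \<alpha> (\<beta> i) else 0)"

definition ddegen :: "nat \<Rightarrow> nat \<Rightarrow> (nat \<Rightarrow> nat) set" where
  "ddegen n m = {\<alpha> \<in> dsimp n m. \<not> inj_on \<alpha> {..m}}"

definition did :: "nat \<Rightarrow> nat \<Rightarrow> nat" where
  "did n = (\<lambda>i. if i \<le> n then i else 0)"

text \<open>Delta[n] with thin set T (sub-simplicial sets are obtained by restricting S).\<close>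
definition dstd :: "(nat \<Rightarrow> (nat \<Rightarrow> nat) set) \<Rightarrow> (nat \<Rightarrow> (nat \<Rightarrow> nat) set) \<Rightarrow> (nat \<Rightarrow> nat) sset" where
  "dstd S T = \<lparr>Simp = S, Act = dact, Thin = T\<rparr>"

definition Delta :: "nat \<Rightarrow> (nat \<Rightarrow> nat) sset" where
  "Delta n = dstd (dsimp n) (ddegen n)"

definition Delta_t :: "nat \<Rightarrow> (nat \<Rightarrow> nat) sset" where
  "Delta_t n = dstd (dsimp n) (\<lambda>m. ddegen n m \<union> (if m = n then {did n} else {}))"

definition nbhd :: "nat \<Rightarrow> nat \<Rightarrow> nat set" where
  "nbhd k n = {j. j \<le> n \<and> (j + 1 = k \<or> j = k \<or> j = k + 1)}"

definition thin_k :: "nat \<Rightarrow> nat \<Rightarrow> nat \<Rightarrow> (nat \<Rightarrow> nat) set" where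
  "thin_k k n m = ddegen n m \<union> {\<alpha> \<in> dsimp n m. nbhd k n \<subseteq> \<alpha> ` {..m}}"

definition Delta_k :: "nat \<Rightarrow> nat \<Rightarrow> (nat \<Rightarrow> nat) sset" where
  "Delta_k k n = dstd (dsimp n) (thin_k k n)"

text \<open>m-simplices of the horn Lambda^k[n]: those factoring through some face d_i, i \<noteq> k.\<close>
definition horn_simp :: "nat \<Rightarrow> nat \<Rightarrow> nat \<Rightarrow> (nat \<Rightarrow> nat) set" where
  "horn_simp k n m = {\<alpha> \<in> dsimp n m. \<exists>i\<le>n. i \<noteq> k \<and> i \<notin> \<alpha> ` {..m}}"

text \<open>Lambda^k[n], regular stratified subset of Delta^k[n].\<close>
definition Lambda_k :: "nat \<Rightarrow> nat \<Rightarrow> (nat \<Rightarrow> nat) sset" where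
  "Lambda_k k n = dstd (horn_simp k n) (\<lambda>m. horn_simp k n m \<inter> thin_k k n m)"

text \<open>Delta^k[n]'' : additionally all (n-1)-simplices thin.\<close>
definition Delta_k2 :: "nat \<Rightarrow> nat \<Rightarrow> (nat \<Rightarrow> nat) sset" where
  "Delta_k2 k n = dstd (dsimp n) (\<lambda>m. thin_k k n m \<union> (if m = n - 1 then dsimp n m else {}))"

text \<open>Delta^k[n]' = Delta^k[n] \<union> Lambda^k[n]'.\<close>
definition Delta_k1 :: "nat \<Rightarrow> nat \<Rightarrow> (nat \<Rightarrow> nat) sset" where
  "Delta_k1 k n = dstd (dsimp n) (\<lambda>m. thin_k k n m \<union> (if m = n - 1 then horn_simp k n m else {}))"

definition weak_complicial :: "'a sset \<Rightarrow> bool" where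
  "weak_complicial X \<longleftrightarrow> stratified X
   \<and> (\<forall>n k. 1 \<le> n \<longrightarrow> k \<le> n \<longrightarrow> rlp (Lambda_k k n) (Delta_k k n) X)
   \<and> (\<forall>n k. 2 \<le> n \<longrightarrow> k \<le> n \<longrightarrow> rlp (Delta_k1 k n) (Delta_k2 k n) X)"

definition sprod :: "'a sset \<Rightarrow> 'b sset \<Rightarrow> ('a \<times> 'b) sset" where
  "sprod A B = \<lparr>Simp = (\<lambda>n. Simp A n \<times> Simp B n),
                Act = (\<lambda>n m \<alpha> p. (Act A n m \<alpha> (fst p), Act B n m \<alpha> (snd p))),
                Thin = (\<lambda>n. Thin A n \<times> Thin B n)\<rparr>"

text \<open>The stratified map Delta[n] -> X classifying an n-simplex a (Yoneda).\<close>
definition yon :: "'a sset \<Rightarrow> nat \<Rightarrow> 'a \<Rightarrow> nat \<Rightarrow> (nat \<Rightarrow> nat) \<Rightarrow> 'a" where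
  "yon X n a = (\<lambda>m \<beta>. Act X n m \<beta> a)"

definition bdry_simp :: "nat \<Rightarrow> nat \<Rightarrow> (nat \<Rightarrow> nat) set" where
  "bdry_simp n m = {\<alpha> \<in> dsimp n m. \<exists>i\<le>n. i \<notin> \<alpha> ` {..m}}"

definition const_simp :: "'a sset \<Rightarrow> 'a \<Rightarrow> nat \<Rightarrow> 'a" where
  "const_simp X x m = Act X 0 m (\<lambda>i. 0) x"

definition c0 :: "nat \<Rightarrow> nat \<Rightarrow> nat" where "c0 m = (\<lambda>i. 0)"
definition c1 :: "nat \<Rightarrow> nat \<Rightarrow> nat" where "c1 m = (\<lambda>i. if i \<le> m then 1 else 0)"

definition homotopic_rel_bdry :: "'a sset \<Rightarrow> nat \<Rightarrow> 'a \<Rightarrow> 'a \<Rightarrow> bool" where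
  "homotopic_rel_bdry X n a b \<longleftrightarrow>
     (\<forall>m \<beta>. \<beta> \<in> bdry_simp n m \<longrightarrow> Act X n m \<beta> a = Act X n m \<beta> b) \<and>
     (\<exists>H. smap (sprod (Delta n) (Delta_t 1)) X H
        \<and> (\<forall>m \<gamma>. \<gamma> \<in> dsimp n m \<longrightarrow> H m (\<gamma>, c0 m) = Act X n m \<gamma> a \<and> H m (\<gamma>, c1 m) = Act X n m \<gamma> b)
        \<and> (\<forall>m \<gamma> \<delta>. \<gamma> \<in> bdry_simp n m \<longrightarrow> \<delta> \<in> dsimp 1 m \<longrightarrow> H m (\<gamma>, \<delta>) = Act X n m \<gamma> a))"

definition sphere_simps :: "'a sset \<Rightarrow> 'a \<Rightarrow> nat \<Rightarrow> 'a set" where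
  "sphere_simps X x n = {a \<in> Simp X n. \<forall>m \<beta>. \<beta> \<in> bdry_simp n m \<longrightarrow> Act X n m \<beta> a = const_simp X x m}"

definition hrel :: "'a sset \<Rightarrow> 'a \<Rightarrow> nat \<Rightarrow> 'a \<Rightarrow> 'a \<Rightarrow> bool" where
  "hrel X x n a b \<longleftrightarrow> a \<in> sphere_simps X x n \<and> b \<in> sphere_simps X x n \<and> homotopic_rel_bdry X n a b"

text \<open>Homotopy class (w.r.t. the equivalence relation generated by \<sim>, which coincides
  with \<sim> whenever \<sim> is already an equivalence relation).\<close>
definition hclass :: "'a sset \<Rightarrow> 'a \<Rightarrow> nat \<Rightarrow> 'a \<Rightarrow> 'a set" where
  "hclass X x n a = {b \<in> sphere_simps X x n. equivclp (hrel X x n) a b}"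

definition face_map :: "nat \<Rightarrow> nat \<Rightarrow> nat" where
  "face_map i = (\<lambda>j. if j < i then j else j + 1)"

definition face :: "'a sset \<Rightarrow> nat \<Rightarrow> nat \<Rightarrow> 'a \<Rightarrow> 'a" where
  "face X n i t = Act X (Suc n) n (face_map i) t"

definition mult_filler :: "'a sset \<Rightarrow> 'a \<Rightarrow> nat \<Rightarrow> 'a \<Rightarrow> 'a \<Rightarrow> 'a \<Rightarrow> bool" where
  "mult_filler X x n t a b \<longleftrightarrow> t \<in> Simp X (Suc n)
     \<and> smap (Delta_k n (Suc n)) X (yon X (Suc n) t)
     \<and> face X n (n - 1) t = a \<and> face X n (Suc n) t = b
     \<and> (\<forall>i\<le>Suc n. i \<notin> {n - 1, n, Suc n} \<longrightarrow> face X n i t = const_simp X x n)"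

definition tau :: "'a sset \<Rightarrow> 'a \<Rightarrow> nat \<Rightarrow> 'a set monoid" where
  "tau X x n = \<lparr>carrier = hclass X x n ` sphere_simps X x n,
     mult = (\<lambda>A B. SOME C. \<exists>a\<in>A. \<exists>b\<in>B. \<exists>t. mult_filler X x n t a b \<and> C = hclass X x n (face X n n t)),
     one = hclass X x n (const_simp X x n)\<rparr>"

end

theory Submission
  imports Defs
begin

text \<open>Call an N-simplex skeleton-trivial if all its faces on at most n vertices are constant at x;
  the n-spheres at x are exactly the skeleton-trivial n-simplices. All simplices of dimension at
  least n are thin, and skeleton-trivial simplices of lower dimension are constant, hence
  degenerate; so every horn of skeleton-trivial simplices of dimension above n, inner or outer,
  has a skeleton-trivial filler.

  Filling horns of dimension n+2 gives a tetrahedron rule for (n+1)-simplices all of whose faces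
  but three consecutive ones are constant: of four such simplices forming the boundary of a
  tetrahedron, any three determine the fourth. With it, "u and v are the faces n and n+1 of such a
  simplex whose face n-1 is constant" is an equivalence relation, which coincides with homotopy
  relative to the boundary (a homotopy is a prism, triangulated by n+1 such simplices); the product
  is well defined and associative, the constant sphere is a left unit, and filling a horn
  Lambda^(n-1)[n+1] gives left inverses.\<close>

section \<open>Simplicial operators\<close>

lemma act_in_Simp:
  "simplicial_set X \<Longrightarrow> mono_map m k \<alpha> \<Longrightarrow> y \<in> Simp X k \<Longrightarrow> Act X k m \<alpha> y \<in> Simp X m"
  unfolding simplicial_set_def by blast

lemma act_act:
  "simplicial_set X \<Longrightarrow> mono_map m k \<alpha> \<Longrightarrow> mono_map p m \<beta> \<Longrightarrow> y \<in> Simp X k \<Longrightarrow>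
   Act X m p \<beta> (Act X k m \<alpha> y) = Act X k p (\<alpha> \<circ> \<beta>) y"
  unfolding simplicial_set_def by blast

lemma act_cong:
  "simplicial_set X \<Longrightarrow> mono_map m k \<alpha> \<Longrightarrow> (\<And>i. i \<le> m \<Longrightarrow> \<alpha> i = \<beta> i) \<Longrightarrow> y \<in> Simp X k \<Longrightarrow>
   Act X k m \<alpha> y = Act X k m \<beta> y"
  unfolding simplicial_set_def by blast

lemma act_ident:
  assumes X: "simplicial_set X" and y: "y \<in> Simp X k" and \<alpha>: "\<And>i. i \<le> k \<Longrightarrow> \<alpha> i = i"
  shows "Act X k k \<alpha> y = y"
proof -
  have "Act X k k \<alpha> y = Act X k k (\<lambda>i. i) y"
    by (rule act_cong[OF X _ _ y]) (use \<alpha> in \<open>auto simp: mono_map_def\<close>)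
  with X y show ?thesis
    unfolding simplicial_set_def by simp
qed

lemma mono_map_comp: "mono_map m k \<alpha> \<Longrightarrow> mono_map p m \<beta> \<Longrightarrow> mono_map p k (\<alpha> \<circ> \<beta>)"
  unfolding mono_map_def by auto

lemma mono_map_face_map: "mono_map M (Suc M) (face_map i)"
  unfolding mono_map_def face_map_def by auto

lemma face_in_Simp: "simplicial_set X \<Longrightarrow> t \<in> Simp X (Suc M) \<Longrightarrow> face X M i t \<in> Simp X M"
  unfolding face_def by (rule act_in_Simp[OF _ mono_map_face_map])

lemma face_face:
  assumes X: "simplicial_set X" and ij: "i < j" and z: "z \<in> Simp X (Suc (Suc L))"
  shows "face X L i (face X (Suc L) j z) = face X L (j - 1) (face X (Suc L) i z)"
proof -
  have "face_map j \<circ> face_map i = face_map i \<circ> face_map (j - 1)"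
    using ij unfolding face_map_def by (auto simp: fun_eq_iff)
  then show ?thesis
    unfolding face_def by (simp add: act_act[OF X mono_map_face_map mono_map_face_map z])
qed

text \<open>A monotone map missing the vertex v factors as face_map v \<circ> drop_vertex v \<alpha>.\<close>
definition drop_vertex :: "nat \<Rightarrow> (nat \<Rightarrow> nat) \<Rightarrow> nat \<Rightarrow> nat" where
  "drop_vertex v \<alpha> = (\<lambda>i. if \<alpha> i < v then \<alpha> i else \<alpha> i - 1)"

lemma mono_map_drop_vertex:
  assumes \<alpha>: "mono_map p (Suc M) \<alpha>" and v: "v \<le> Suc M" "v \<notin> \<alpha> ` {..p}"
  shows "mono_map p M (drop_vertex v \<alpha>)"
proof -
  have ne: "\<alpha> i \<noteq> v" if "i \<le> p" for i
    using v that by auto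
  have le: "\<alpha> i \<le> Suc M" and mono: "\<alpha> i \<le> \<alpha> j" if "i \<le> j" "j \<le> p" for i j
    using \<alpha> that unfolding mono_map_def by auto
  show ?thesis
    unfolding mono_map_def drop_vertex_def
  proof (intro conjI allI impI)
    fix i assume "i \<le> p"
    with le[of i i] ne[of i] v(1) show "(if \<alpha> i < v then \<alpha> i else \<alpha> i - 1) \<le> M"
      by auto
  next
    fix i j assume "i \<le> j" "j \<le> p"
    with mono[of i j] ne[of i] ne[of j]
    show "(if \<alpha> i < v then \<alpha> i else \<alpha> i - 1) \<le> (if \<alpha> j < v then \<alpha> j else \<alpha> j - 1)"
      by auto
  qed
qed

lemma face_map_drop_vertex:
  assumes "v \<notin> \<alpha> ` {..p}" "i \<le> p"
  shows "face_map v (drop_vertex v \<alpha> i) = \<alpha> i"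
proof -
  have "\<alpha> i \<noteq> v" using assms by auto
  then show ?thesis unfolding face_map_def drop_vertex_def by auto
qed

lemma card_image_drop_vertex:
  assumes "v \<notin> \<alpha> ` {..p}"
  shows "card (drop_vertex v \<alpha> ` {..p}) = card (\<alpha> ` {..p})"
proof -
  have "\<alpha> ` {..p} = face_map v ` drop_vertex v \<alpha> ` {..p}"
    using face_map_drop_vertex[OF assms] by (auto simp: image_image)
  moreover have "inj (face_map v)"
    unfolding face_map_def inj_def by auto
  ultimately show ?thesis
    by (simp add: card_image inj_on_subset)
qed

lemma act_through_face:
  assumes X: "simplicial_set X" and \<alpha>: "mono_map p (Suc M) \<alpha>"
    and v: "v \<le> Suc M" "v \<notin> \<alpha> ` {..p}" and y: "y \<in> Simp X (Suc M)"
  shows "Act X (Suc M) p \<alpha> y = Act X M p (drop_vertex v \<alpha>) (face X M v y)"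
proof -
  have \<alpha>': "mono_map p M (drop_vertex v \<alpha>)"
    by (rule mono_map_drop_vertex[OF \<alpha> v])
  have "Act X M p (drop_vertex v \<alpha>) (face X M v y) = Act X (Suc M) p (face_map v \<circ> drop_vertex v \<alpha>) y"
    unfolding face_def by (rule act_act[OF X mono_map_face_map \<alpha>' y])
  also have "\<dots> = Act X (Suc M) p \<alpha> y"
    by (rule act_cong[OF X mono_map_comp[OF mono_map_face_map \<alpha>'] _ y])
      (simp add: face_map_drop_vertex[OF v(2)])
  finally show ?thesis by simp
qed

lemma exists_vertex_not_in_image:
  fixes \<alpha> :: "nat \<Rightarrow> nat"
  assumes "card (\<alpha> ` {..p}) \<le> n" and "n \<le> N" and "n < N \<or> N < k"
  shows "\<exists>v\<le>N. v \<noteq> k \<and> v \<notin> \<alpha> ` {..p}"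
proof (rule ccontr)
  assume "\<not> ?thesis"
  then have "{..N} - {k} \<subseteq> \<alpha> ` {..p}" by auto
  then have "card ({..N} - {k}) \<le> card (\<alpha> ` {..p})"
    by (intro card_mono) auto
  moreover have "card ({..N} - {k}) = (if k \<le> N then N else Suc N)"
    by auto
  ultimately show False
    using assms by (auto split: if_splits)
qed

lemma card_image_le_if_vertex_missed:
  assumes "mono_map p N \<alpha>" "v \<le> N" "v \<notin> \<alpha> ` {..p}"
  shows "card (\<alpha> ` {..p}) \<le> N"
proof -
  have "\<alpha> ` {..p} \<subseteq> {..N} - {v}"
    using assms unfolding mono_map_def by auto
  then have "card (\<alpha> ` {..p}) \<le> card ({..N} - {v})"
    by (intro card_mono) auto
  then show ?thesis
    using assms(2) by simp
qed

section \<open>Standard simplices\<close>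

lemma mono_map_dact: "mono_map p N \<alpha> \<Longrightarrow> mono_map q p \<beta> \<Longrightarrow> mono_map q N (dact p q \<beta> \<alpha>)"
  unfolding mono_map_def dact_def by auto

lemma dact_in_dsimp: "\<alpha> \<in> dsimp N p \<Longrightarrow> mono_map q p \<beta> \<Longrightarrow> dact p q \<beta> \<alpha> \<in> dsimp N q"
  unfolding dsimp_def using mono_map_dact by (auto simp: dact_def)

lemma did_in_dsimp: "did N \<in> dsimp N N"
  unfolding dsimp_def did_def mono_map_def by auto

lemma dact_did: "\<alpha> \<in> dsimp N p \<Longrightarrow> dact N p \<alpha> (did N) = \<alpha>"
  unfolding dsimp_def dact_def did_def mono_map_def by (auto simp: fun_eq_iff)

lemma ddegen_dim_pos: "\<gamma> \<in> ddegen N p \<Longrightarrow> 1 \<le> p"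
  unfolding ddegen_def by (cases p) auto

lemma thin_k_vertices_empty:
  assumes "k \<le> N" "1 \<le> N"
  shows "thin_k k N 0 = {}"
proof -
  obtain a b where ab: "a \<noteq> b" "a \<in> nbhd k N" "b \<in> nbhd k N"
  proof (cases "k < N")
    case True
    then show ?thesis using that[of k "Suc k"] unfolding nbhd_def by auto
  next
    case False
    then show ?thesis using that[of "k - 1" k] assms unfolding nbhd_def by auto
  qed
  have "\<not> nbhd k N \<subseteq> \<alpha> ` {..0}" for \<alpha> :: "nat \<Rightarrow> nat"
  proof
    assume "nbhd k N \<subseteq> \<alpha> ` {..0}"
    with ab have "a = \<alpha> 0" "b = \<alpha> 0" by auto
    with ab show False by simp
  qed
  then show ?thesis
    unfolding thin_k_def ddegen_def by auto
qed

definition dsimp_of :: "nat \<Rightarrow> (nat \<Rightarrow> nat) \<Rightarrow> nat \<Rightarrow> nat" where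
  "dsimp_of p \<alpha> = (\<lambda>i. if i \<le> p then \<alpha> i else 0)"

lemma dsimp_of_in_dsimp: "mono_map p N \<alpha> \<Longrightarrow> dsimp_of p \<alpha> \<in> dsimp N p"
  unfolding dsimp_of_def dsimp_def mono_map_def by auto

lemma image_dsimp_of: "dsimp_of p \<alpha> ` {..p} = \<alpha> ` {..p}"
  unfolding dsimp_of_def by auto

lemma smap_standard_simplex:
  assumes X: "simplicial_set X" and g: "smap (dstd (dsimp N) T) X g" and \<alpha>: "mono_map p N \<alpha>"
  shows "g p (dsimp_of p \<alpha>) = Act X N p \<alpha> (g N (did N))"
proof -
  have \<alpha>': "dsimp_of p \<alpha> \<in> dsimp N p"
    by (rule dsimp_of_in_dsimp[OF \<alpha>])
  have z: "g N (did N) \<in> Simp X N"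
    using g did_in_dsimp unfolding smap_def dstd_def by auto
  have "g p (dact N p (dsimp_of p \<alpha>) (did N)) = Act X N p (dsimp_of p \<alpha>) (g N (did N))"
    using g did_in_dsimp \<alpha>' unfolding smap_def dstd_def dsimp_def by auto
  also have "\<dots> = Act X N p \<alpha> (g N (did N))"
    using \<alpha>' by (intro act_cong[OF X _ _ z]) (auto simp: dsimp_def dsimp_of_def)
  finally show ?thesis
    by (simp add: dact_did[OF \<alpha>'])
qed

lemma smap_yon:
  assumes X: "simplicial_set X" and t: "t \<in> Simp X N"
    and thin: "\<And>p \<alpha>. \<alpha> \<in> T p \<Longrightarrow> Act X N p \<alpha> t \<in> Thin X p"
  shows "smap (dstd (dsimp N) T) X (yon X N t)"
  unfolding smap_def dstd_def yon_def
proof (simp only: sset.simps, intro conjI allI impI thin)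
  fix p \<alpha> assume "\<alpha> \<in> dsimp N p"
  then show "Act X N p \<alpha> t \<in> Simp X p"
    using act_in_Simp[OF X _ t] unfolding dsimp_def by auto
next
  fix p q \<beta> \<alpha> assume \<beta>: "mono_map q p \<beta>" and "\<alpha> \<in> dsimp N p"
  then have \<alpha>: "mono_map p N \<alpha>" unfolding dsimp_def by simp
  have "Act X N q (dact p q \<beta> \<alpha>) t = Act X N q (\<alpha> \<circ> \<beta>) t"
    by (rule act_cong[OF X mono_map_dact[OF \<alpha> \<beta>] _ t]) (simp add: dact_def)
  then show "Act X N q (dact p q \<beta> \<alpha>) t = Act X p q \<beta> (Act X N p \<alpha> t)"
    by (simp add: act_act[OF X \<alpha> \<beta> t])
qed

definition codegen :: "nat \<Rightarrow> nat \<Rightarrow> nat \<Rightarrow> nat" where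
  "codegen N j = (\<lambda>i. if i \<le> j then i else if i \<le> Suc N then i - 1 else 0)"

lemma codegen_in_dsimp: "j \<le> N \<Longrightarrow> codegen N j \<in> dsimp N (Suc N)"
  unfolding codegen_def dsimp_def mono_map_def by auto

lemma codegen_face_map_adjacent:
  "q = j \<or> q = Suc j \<Longrightarrow> i \<le> N \<Longrightarrow> codegen N j (face_map q i) = i"
  unfolding codegen_def face_map_def by auto

lemma codegen_face_map_other:
  assumes "j \<le> N" "q \<le> Suc N" "q \<noteq> j" "q \<noteq> Suc j"
  shows "\<exists>v\<le>N. v \<notin> (\<lambda>i. codegen N j (face_map q i)) ` {..N}"
proof (cases "q < j")
  case True
  then have "q \<notin> (\<lambda>i. codegen N j (face_map q i)) ` {..N}"
    unfolding codegen_def face_map_def by auto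
  moreover have "q \<le> N" using True assms by simp
  ultimately show ?thesis by blast
next
  case False
  with assms have "Suc (Suc j) \<le> q" by simp
  then have "q - 1 \<notin> (\<lambda>i. codegen N j (face_map q i)) ` {..N}"
    unfolding codegen_def face_map_def by (auto split: if_splits)
  moreover have "q - 1 \<le> N" using assms by simp
  ultimately show ?thesis by blast
qed

lemma dact_face_map_codegen_adjacent:
  "q = j \<or> q = Suc j \<Longrightarrow> dact (Suc N) N (face_map q) (codegen N j) = did N"
  using codegen_face_map_adjacent unfolding dact_def did_def by (auto simp: fun_eq_iff)

lemma dact_face_map_codegen_bdry:
  assumes j: "j \<le> N" and q: "q \<le> Suc N" "q \<noteq> j" "q \<noteq> Suc j"
  shows "dact (Suc N) N (face_map q) (codegen N j) \<in> bdry_simp N N"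
proof -
  obtain v where "v \<le> N" "v \<notin> (\<lambda>i. codegen N j (face_map q i)) ` {..N}"
    using codegen_face_map_other[OF j q] by blast
  moreover have "dact (Suc N) N (face_map q) (codegen N j) ` {..N} = (\<lambda>i. codegen N j (face_map q i)) ` {..N}"
    unfolding dact_def by auto
  ultimately show ?thesis
    unfolding bdry_simp_def using dact_in_dsimp[OF codegen_in_dsimp[OF j] mono_map_face_map] by auto
qed

lemma dact_face_map_did_bdry:
  assumes "q \<le> Suc L"
  shows "dact (Suc L) L (face_map q) (did (Suc L)) \<in> bdry_simp (Suc L) L"
proof -
  have "q \<notin> dact (Suc L) L (face_map q) (did (Suc L)) ` {..L}"
    unfolding dact_def did_def face_map_def by auto
  then show ?thesis
    unfolding bdry_simp_def using dact_in_dsimp[OF did_in_dsimp mono_map_face_map] assms by blast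
qed

definition jump :: "nat \<Rightarrow> nat \<Rightarrow> nat \<Rightarrow> nat" where
  "jump N j = (\<lambda>i. if j \<le> i \<and> i \<le> N then 1 else 0)"

lemma jump_in_dsimp: "jump N j \<in> dsimp 1 N"
  unfolding jump_def dsimp_def mono_map_def by auto

lemma dact_face_map_jump:
  "dact (Suc N) N (face_map q) (jump (Suc N) (Suc j)) = jump N (if q \<le> j then j else Suc j)"
  unfolding dact_def jump_def face_map_def by (auto simp: fun_eq_iff)

lemma jump_0: "jump N 0 = c1 N"
  unfolding jump_def c1_def by (auto simp: fun_eq_iff)

lemma jump_Suc: "jump N (Suc N) = c0 N"
  unfolding jump_def c0_def by (auto simp: fun_eq_iff)

text \<open>The monotone map Delta[N] \<times> Delta[1] -> Delta[N+1] sending (i,0) and (i,1) to i,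
  except (N,1), which goes to N+1.\<close>
definition prism_collapse :: "nat \<Rightarrow> (nat \<Rightarrow> nat) \<Rightarrow> (nat \<Rightarrow> nat) \<Rightarrow> nat \<Rightarrow> nat" where
  "prism_collapse N \<gamma> \<delta> = (\<lambda>i. if \<delta> i = 1 \<and> \<gamma> i = N then Suc N else \<gamma> i)"

lemma mono_map_prism_collapse:
  assumes \<gamma>: "\<gamma> \<in> dsimp N p" and \<delta>: "\<delta> \<in> dsimp 1 p"
  shows "mono_map p (Suc N) (prism_collapse N \<gamma> \<delta>)"
  unfolding mono_map_def prism_collapse_def
proof (intro conjI allI impI)
  fix i assume "i \<le> p"
  then show "(if \<delta> i = 1 \<and> \<gamma> i = N then Suc N else \<gamma> i) \<le> Suc N"
    using \<gamma> unfolding dsimp_def mono_map_def by auto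
next
  fix i j assume "i \<le> j" "j \<le> p"
  then have "\<gamma> i \<le> \<gamma> j" "\<delta> i \<le> \<delta> j" "\<gamma> j \<le> N" "\<delta> j \<le> 1"
    using \<gamma> \<delta> unfolding dsimp_def mono_map_def by auto
  then show "(if \<delta> i = 1 \<and> \<gamma> i = N then Suc N else \<gamma> i) \<le> (if \<delta> j = 1 \<and> \<gamma> j = N then Suc N else \<gamma> j)"
    by auto
qed

lemma act_prism_collapse_c0:
  assumes X: "simplicial_set X" and t: "t \<in> Simp X (Suc N)" and \<gamma>: "\<gamma> \<in> dsimp N p"
  shows "Act X (Suc N) p (prism_collapse N \<gamma> (c0 p)) t = Act X N p \<gamma> (face X N (Suc N) t)"
proof -
  have \<gamma>': "mono_map p N \<gamma>" "\<And>i. i \<le> p \<Longrightarrow> \<gamma> i \<le> N"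
    using \<gamma> unfolding dsimp_def mono_map_def by auto
  have "Act X N p \<gamma> (face X N (Suc N) t) = Act X (Suc N) p (face_map (Suc N) \<circ> \<gamma>) t"
    unfolding face_def by (rule act_act[OF X mono_map_face_map \<gamma>'(1) t])
  also have "\<dots> = Act X (Suc N) p (prism_collapse N \<gamma> (c0 p)) t"
    using \<gamma>'(2) by (intro act_cong[OF X mono_map_comp[OF mono_map_face_map \<gamma>'(1)] _ t])
      (auto simp: prism_collapse_def c0_def face_map_def less_Suc_eq_le)
  finally show ?thesis ..
qed

lemma act_prism_collapse_c1:
  assumes X: "simplicial_set X" and t: "t \<in> Simp X (Suc N)" and \<gamma>: "\<gamma> \<in> dsimp N p"
  shows "Act X (Suc N) p (prism_collapse N \<gamma> (c1 p)) t = Act X N p \<gamma> (face X N N t)"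
proof -
  have \<gamma>': "mono_map p N \<gamma>" "\<And>i. i \<le> p \<Longrightarrow> \<gamma> i \<le> N"
    using \<gamma> unfolding dsimp_def mono_map_def by auto
  have "Act X N p \<gamma> (face X N N t) = Act X (Suc N) p (face_map N \<circ> \<gamma>) t"
    unfolding face_def by (rule act_act[OF X mono_map_face_map \<gamma>'(1) t])
  also have "\<dots> = Act X (Suc N) p (prism_collapse N \<gamma> (c1 p)) t"
    using \<gamma>'(2) by (intro act_cong[OF X mono_map_comp[OF mono_map_face_map \<gamma>'(1)] _ t])
      (fastforce simp: prism_collapse_def c1_def face_map_def le_neq_implies_less)
  finally show ?thesis ..
qed

lemma sprod_Delta_Delta_t:
  "Simp (sprod (Delta N) (Delta_t 1)) p = dsimp N p \<times> dsimp 1 p"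
  "Act (sprod (Delta N) (Delta_t 1)) P Q \<beta> \<gamma>\<delta> = (dact P Q \<beta> (fst \<gamma>\<delta>), dact P Q \<beta> (snd \<gamma>\<delta>))"
  "Thin (sprod (Delta N) (Delta_t 1)) p = ddegen N p \<times> (ddegen 1 p \<union> (if p = 1 then {did 1} else {}))"
  unfolding sprod_def Delta_def Delta_t_def dstd_def by auto

section \<open>Horns\<close>

definition is_horn :: "'a sset \<Rightarrow> nat \<Rightarrow> nat \<Rightarrow> (nat \<Rightarrow> 'a) \<Rightarrow> bool" where
  "is_horn X L k y \<longleftrightarrow>
     (\<forall>c \<le> Suc (Suc L). c \<noteq> k \<longrightarrow> y c \<in> Simp X (Suc L)) \<and>
     (\<forall>i j. i < j \<longrightarrow> j \<le> Suc (Suc L) \<longrightarrow> i \<noteq> k \<longrightarrow> j \<noteq> k \<longrightarrow>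
        face X L i (y j) = face X L (j - 1) (y i))"

lemma horn_faces_agree_less:
  assumes X: "simplicial_set X" and y: "is_horn X L k y" and \<alpha>: "mono_map p (Suc (Suc L)) \<alpha>"
    and vw: "v < w" "w \<le> Suc (Suc L)" "v \<noteq> k" "w \<noteq> k" "v \<notin> \<alpha> ` {..p}" "w \<notin> \<alpha> ` {..p}"
  shows "Act X (Suc L) p (drop_vertex v \<alpha>) (y v) = Act X (Suc L) p (drop_vertex w \<alpha>) (y w)"
proof -
  have yv: "y v \<in> Simp X (Suc L)" and yw: "y w \<in> Simp X (Suc L)"
    using y vw unfolding is_horn_def by auto
  have \<alpha>v: "mono_map p (Suc L) (drop_vertex v \<alpha>)" and \<alpha>w: "mono_map p (Suc L) (drop_vertex w \<alpha>)"
    using mono_map_drop_vertex[OF \<alpha>] vw by auto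
  have ne: "\<alpha> i \<noteq> v" "\<alpha> i \<noteq> w" if "i \<le> p" for i
    using vw that by auto
  have w1: "w - 1 \<notin> drop_vertex v \<alpha> ` {..p}" and v1: "v \<notin> drop_vertex w \<alpha> ` {..p}"
    using ne vw(1) unfolding drop_vertex_def by (fastforce split: if_splits)+
  have "Act X (Suc L) p (drop_vertex v \<alpha>) (y v)
      = Act X L p (drop_vertex (w - 1) (drop_vertex v \<alpha>)) (face X L (w - 1) (y v))"
    by (rule act_through_face[OF X \<alpha>v _ w1 yv]) (use vw in auto)
  also have "\<dots> = Act X L p (drop_vertex v (drop_vertex w \<alpha>)) (face X L (w - 1) (y v))"
    using ne vw(1) mono_map_drop_vertex[OF \<alpha>v _ w1] face_in_Simp[OF X yv] vw(2)
    by (intro act_cong[OF X]) (auto simp: drop_vertex_def)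
  also have "\<dots> = Act X L p (drop_vertex v (drop_vertex w \<alpha>)) (face X L v (y w))"
    using y vw unfolding is_horn_def by auto
  also have "\<dots> = Act X (Suc L) p (drop_vertex w \<alpha>) (y w)"
    by (rule act_through_face[OF X \<alpha>w _ v1 yw, symmetric]) (use vw in auto)
  finally show ?thesis .
qed

lemma horn_faces_agree:
  assumes X: "simplicial_set X" and y: "is_horn X L k y" and \<alpha>: "mono_map p (Suc (Suc L)) \<alpha>"
    and v: "v \<le> Suc (Suc L)" "v \<noteq> k" "v \<notin> \<alpha> ` {..p}"
    and w: "w \<le> Suc (Suc L)" "w \<noteq> k" "w \<notin> \<alpha> ` {..p}"
  shows "Act X (Suc L) p (drop_vertex v \<alpha>) (y v) = Act X (Suc L) p (drop_vertex w \<alpha>) (y w)"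
  using horn_faces_agree_less[OF X y \<alpha>] v w by (cases v w rule: linorder_cases) auto

text \<open>On a simplex of Lambda^k[L+2] missing the vertex v \<noteq> k the value is read off from y v;
  by horn_faces_agree it does not depend on the choice of v.\<close>
definition horn_map :: "'a sset \<Rightarrow> nat \<Rightarrow> nat \<Rightarrow> (nat \<Rightarrow> 'a) \<Rightarrow> nat \<Rightarrow> (nat \<Rightarrow> nat) \<Rightarrow> 'a" where
  "horn_map X L k y p \<alpha> =
     (let v = SOME v. v \<le> Suc (Suc L) \<and> v \<noteq> k \<and> v \<notin> \<alpha> ` {..p}
      in Act X (Suc L) p (drop_vertex v \<alpha>) (y v))"

lemma horn_map_eq:
  assumes X: "simplicial_set X" and y: "is_horn X L k y" and \<alpha>: "mono_map p (Suc (Suc L)) \<alpha>"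
    and v: "v \<le> Suc (Suc L)" "v \<noteq> k" "v \<notin> \<alpha> ` {..p}"
  shows "horn_map X L k y p \<alpha> = Act X (Suc L) p (drop_vertex v \<alpha>) (y v)"
proof -
  let ?P = "\<lambda>v. v \<le> Suc (Suc L) \<and> v \<noteq> k \<and> v \<notin> \<alpha> ` {..p}"
  have "?P (SOME v. ?P v)"
    by (rule someI[of ?P v]) (use v in auto)
  then show ?thesis
    unfolding horn_map_def Let_def using horn_faces_agree[OF X y \<alpha> _ _ _ v] by blast
qed

lemma horn_simp_missing_vertex:
  assumes "\<alpha> \<in> horn_simp k (Suc (Suc L)) p"
  obtains v where "mono_map p (Suc (Suc L)) \<alpha>" "v \<le> Suc (Suc L)" "v \<noteq> k" "v \<notin> \<alpha> ` {..p}"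
  using assms unfolding horn_simp_def dsimp_def by auto

lemma horn_map_in_Simp:
  assumes X: "simplicial_set X" and y: "is_horn X L k y" and \<alpha>: "\<alpha> \<in> horn_simp k (Suc (Suc L)) p"
  shows "horn_map X L k y p \<alpha> \<in> Simp X p"
proof -
  obtain v where v: "mono_map p (Suc (Suc L)) \<alpha>" "v \<le> Suc (Suc L)" "v \<noteq> k" "v \<notin> \<alpha> ` {..p}"
    using horn_simp_missing_vertex[OF \<alpha>] .
  then have "y v \<in> Simp X (Suc L)"
    using y unfolding is_horn_def by blast
  then show ?thesis
    unfolding horn_map_eq[OF X y v]
    by (rule act_in_Simp[OF X mono_map_drop_vertex[OF v(1,2,4)]])
qed

lemma horn_map_natural:
  assumes X: "simplicial_set X" and y: "is_horn X L k y"
    and \<alpha>: "\<alpha> \<in> horn_simp k (Suc (Suc L)) p" and \<beta>: "mono_map q p \<beta>"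
  shows "horn_map X L k y q (dact p q \<beta> \<alpha>) = Act X p q \<beta> (horn_map X L k y p \<alpha>)"
proof -
  obtain v where v: "mono_map p (Suc (Suc L)) \<alpha>" "v \<le> Suc (Suc L)" "v \<noteq> k" "v \<notin> \<alpha> ` {..p}"
    using horn_simp_missing_vertex[OF \<alpha>] .
  have \<beta>\<alpha>: "mono_map q (Suc (Suc L)) (dact p q \<beta> \<alpha>)" "v \<notin> dact p q \<beta> \<alpha> ` {..q}"
    using mono_map_dact[OF v(1) \<beta>] v(4) \<beta> unfolding dact_def mono_map_def by auto
  have yv: "y v \<in> Simp X (Suc L)"
    using y v unfolding is_horn_def by blast
  have "horn_map X L k y q (dact p q \<beta> \<alpha>) = Act X (Suc L) q (drop_vertex v (dact p q \<beta> \<alpha>)) (y v)"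
    by (rule horn_map_eq[OF X y \<beta>\<alpha>(1) v(2,3) \<beta>\<alpha>(2)])
  also have "\<dots> = Act X (Suc L) q (drop_vertex v \<alpha> \<circ> \<beta>) (y v)"
    by (rule act_cong[OF X mono_map_drop_vertex[OF \<beta>\<alpha>(1) v(2) \<beta>\<alpha>(2)] _ yv])
      (simp add: drop_vertex_def dact_def)
  also have "\<dots> = Act X p q \<beta> (horn_map X L k y p \<alpha>)"
    using act_act[OF X mono_map_drop_vertex[OF v(1,2,4)] \<beta> yv] horn_map_eq[OF X y v] by simp
  finally show ?thesis .
qed

text \<open>If F i j (i < j) is the face shared by the faces i and j of a simplex, then face_pattern F c q
  is the q-th face of its c-th face.\<close>
definition face_pattern :: "(nat \<Rightarrow> nat \<Rightarrow> 'a) \<Rightarrow> nat \<Rightarrow> nat \<Rightarrow> 'a" where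
  "face_pattern F c q = (if q < c then F q c else F c (Suc q))"

lemma face_pattern_shift:
  assumes "c \<le> 3"
  shows "(if q = p then face_pattern e c 0 else if q = Suc p then face_pattern e c 1
          else if q = Suc (Suc p) then face_pattern e c 2 else d)
       = face_pattern (\<lambda>i j. if p \<le> i \<and> j \<le> p + 3 then e (i - p) (j - p) else d) (p + c) q"
  using assms unfolding face_pattern_def by (auto simp: numeral_3_eq_3 numeral_2_eq_2 le_Suc_eq)

lemma nat_le_3_iff: "(c::nat) \<le> 3 \<longleftrightarrow> c = 0 \<or> c = 1 \<or> c = 2 \<or> c = 3"
  by arith

text \<open>The edges 01, 02, 03, 12, 13, 23 of a tetrahedron labelled A, B, C, D, E, F; its faces
  0, 1, 2, 3 then have edges (A, B, C), (A, D, E), (B, D, F), (C, E, F).\<close>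
definition tetra_edges :: "'a \<Rightarrow> 'a \<Rightarrow> 'a \<Rightarrow> 'a \<Rightarrow> 'a \<Rightarrow> 'a \<Rightarrow> nat \<Rightarrow> nat \<Rightarrow> 'a" where
  "tetra_edges A B C D E F = (\<lambda>i j. if i = 0 then (if j = 1 then A else if j = 2 then B else C)
     else if i = 1 then (if j = 2 then D else E) else F)"

section \<open>Skeleton-trivial simplices and horn filling\<close>

locale thin_above =
  fixes X :: "'a sset" and x :: 'a and n :: nat
  assumes dim_pos: "1 \<le> n"
    and stratified: "stratified X"
    and horn_lifting: "\<And>N k. 1 \<le> N \<Longrightarrow> k \<le> N \<Longrightarrow> rlp (Lambda_k k N) (Delta_k k N) X"
    and thin_from_dim: "\<And>k. n \<le> k \<Longrightarrow> Simp X k \<subseteq> Thin X k"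
    and base_point: "x \<in> Simp X 0"
begin

lemma simplicial: "simplicial_set X"
  using stratified unfolding stratified_def by simp

lemma Suc_pred_dim: "Suc (n - 1) = n"
  using dim_pos by simp

lemma Suc_pred_dim_le: "Suc (n - 1) \<le> n"
  using dim_pos by simp

abbreviation pt :: "nat \<Rightarrow> 'a" where
  "pt p \<equiv> const_simp X x p"

lemma mono_map_to_0: "mono_map p 0 (\<lambda>i. 0)"
  by (simp add: mono_map_def)

lemma pt_in_Simp: "pt p \<in> Simp X p"
  unfolding const_simp_def by (rule act_in_Simp[OF simplicial mono_map_to_0 base_point])

lemma act_pt: "mono_map q p \<beta> \<Longrightarrow> Act X p q \<beta> (pt p) = pt q"
  unfolding const_simp_def by (simp add: act_act[OF simplicial mono_map_to_0 _ base_point] comp_def)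

lemma face_pt: "face X M i (pt (Suc M)) = pt M"
  unfolding face_def by (rule act_pt[OF mono_map_face_map])

lemma pt_thin:
  assumes "1 \<le> p"
  shows "pt p \<in> Thin X p"
proof -
  have "\<not> inj_on (\<lambda>i::nat. 0::nat) {..p}"
    using assms unfolding inj_on_def by (metis atMost_iff le0 one_neq_zero)
  then have "pt p \<in> degenerate X p"
    unfolding const_simp_def degenerate_def using mono_map_to_0 base_point by blast
  then show ?thesis
    using stratified unfolding stratified_def by blast
qed

text \<open>The (n-1)-skeleton of t is constant at x: every face of t on at most n vertices is.\<close>
definition skeleton_trivial :: "nat \<Rightarrow> 'a \<Rightarrow> bool" where
  "skeleton_trivial N t \<longleftrightarrow> t \<in> Simp X N \<and>
     (\<forall>p \<alpha>. mono_map p N \<alpha> \<longrightarrow> card (\<alpha> ` {..p}) \<le> n \<longrightarrow> Act X N p \<alpha> t = pt p)"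

lemma skeleton_trivial_in_Simp: "skeleton_trivial N t \<Longrightarrow> t \<in> Simp X N"
  unfolding skeleton_trivial_def by simp

lemma skeleton_trivialD:
  "skeleton_trivial N t \<Longrightarrow> mono_map p N \<alpha> \<Longrightarrow> card (\<alpha> ` {..p}) \<le> n \<Longrightarrow> Act X N p \<alpha> t = pt p"
  unfolding skeleton_trivial_def by simp

lemma skeleton_trivial_pt: "skeleton_trivial N (pt N)"
  unfolding skeleton_trivial_def using pt_in_Simp act_pt by simp

lemma skeleton_trivial_act:
  assumes t: "skeleton_trivial N t" and \<alpha>: "mono_map M N \<alpha>"
  shows "skeleton_trivial M (Act X N M \<alpha> t)"
  unfolding skeleton_trivial_def
proof (intro conjI allI impI)
  show "Act X N M \<alpha> t \<in> Simp X M"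
    by (rule act_in_Simp[OF simplicial \<alpha> skeleton_trivial_in_Simp[OF t]])
next
  fix p \<beta> assume \<beta>: "mono_map p M \<beta>" and card: "card (\<beta> ` {..p}) \<le> n"
  have "card ((\<alpha> \<circ> \<beta>) ` {..p}) \<le> card (\<beta> ` {..p})"
    by (metis card_image_le finite_atMost finite_imageI image_comp)
  with card show "Act X M p \<beta> (Act X N M \<alpha> t) = pt p"
    using act_act[OF simplicial \<alpha> \<beta> skeleton_trivial_in_Simp[OF t]]
      skeleton_trivialD[OF t mono_map_comp[OF \<alpha> \<beta>]] by simp
qed

lemma skeleton_trivial_face: "skeleton_trivial (Suc M) t \<Longrightarrow> skeleton_trivial M (face X M i t)"
  unfolding face_def by (rule skeleton_trivial_act[OF _ mono_map_face_map])

text \<open>A face on at most n vertices misses a vertex v \<noteq> k, so it lies in the face v.\<close>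
lemma skeleton_trivial_from_faces_except:
  assumes t: "t \<in> Simp X (Suc M)" and dim: "n \<le> Suc M" "n < Suc M \<or> Suc M < k"
    and faces: "\<And>v. v \<le> Suc M \<Longrightarrow> v \<noteq> k \<Longrightarrow> skeleton_trivial M (face X M v t)"
  shows "skeleton_trivial (Suc M) t"
  unfolding skeleton_trivial_def
proof (intro conjI allI impI t)
  fix p \<alpha> assume \<alpha>: "mono_map p (Suc M) \<alpha>" and card: "card (\<alpha> ` {..p}) \<le> n"
  obtain v where v: "v \<le> Suc M" "v \<noteq> k" "v \<notin> \<alpha> ` {..p}"
    using exists_vertex_not_in_image[OF card dim] by blast
  have "Act X (Suc M) p \<alpha> t = Act X M p (drop_vertex v \<alpha>) (face X M v t)"
    by (rule act_through_face[OF simplicial \<alpha> v(1,3) t])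
  also have "\<dots> = pt p"
    using card card_image_drop_vertex[OF v(3)]
    by (intro skeleton_trivialD[OF faces[OF v(1,2)] mono_map_drop_vertex[OF \<alpha> v(1,3)]]) simp
  finally show "Act X (Suc M) p \<alpha> t = pt p" .
qed

lemma skeleton_trivial_from_faces:
  assumes "t \<in> Simp X (Suc M)" "n \<le> Suc M"
    and "\<And>v. v \<le> Suc M \<Longrightarrow> skeleton_trivial M (face X M v t)"
  shows "skeleton_trivial (Suc M) t"
  using assms by (intro skeleton_trivial_from_faces_except[where k = "Suc (Suc M)"]) auto

lemma skeleton_trivial_low_dim: "skeleton_trivial N y \<Longrightarrow> N < n \<Longrightarrow> y = pt N"
  using skeleton_trivialD[of N y N "\<lambda>i. i"] act_ident[OF simplicial skeleton_trivial_in_Simp]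
  by (simp add: mono_map_def)

lemma skeleton_trivial_face_pt: "skeleton_trivial n y \<Longrightarrow> n = Suc L \<Longrightarrow> face X L i y = pt L"
  using skeleton_trivial_face skeleton_trivial_low_dim by auto

lemma skeleton_trivial_missing_vertex:
  "skeleton_trivial n y \<Longrightarrow> mono_map p n \<alpha> \<Longrightarrow> v \<le> n \<Longrightarrow> v \<notin> \<alpha> ` {..p} \<Longrightarrow> Act X n p \<alpha> y = pt p"
  using skeleton_trivialD card_image_le_if_vertex_missed by blast

lemma sphere_simps_iff: "y \<in> sphere_simps X x n \<longleftrightarrow> skeleton_trivial n y"
proof
  assume y: "y \<in> sphere_simps X x n"
  show "skeleton_trivial n y"
    unfolding skeleton_trivial_def
  proof (intro conjI allI impI)
    show "y \<in> Simp X n" using y unfolding sphere_simps_def by simp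
  next
    fix p \<alpha> assume \<alpha>: "mono_map p n \<alpha>" and "card (\<alpha> ` {..p}) \<le> n"
    then obtain v where "v \<le> n" "v \<notin> \<alpha> ` {..p}"
      using exists_vertex_not_in_image[of \<alpha> p n n "Suc n"] by auto
    with \<alpha> have "dsimp_of p \<alpha> \<in> bdry_simp n p"
      unfolding bdry_simp_def using dsimp_of_in_dsimp image_dsimp_of by blast
    then have "Act X n p (dsimp_of p \<alpha>) y = pt p"
      using y unfolding sphere_simps_def by auto
    moreover have "Act X n p \<alpha> y = Act X n p (dsimp_of p \<alpha>) y"
      using y by (intro act_cong[OF simplicial \<alpha>]) (auto simp: dsimp_of_def sphere_simps_def)
    ultimately show "Act X n p \<alpha> y = pt p" by simp
  qed
next
  assume y: "skeleton_trivial n y"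
  show "y \<in> sphere_simps X x n"
    unfolding sphere_simps_def bdry_simp_def dsimp_def
    using skeleton_trivial_in_Simp[OF y] skeleton_trivial_missing_vertex[OF y] by blast
qed

text \<open>Positive-dimensional simplices are thin either by dimension or, below n, by being
  constant, hence degenerate.\<close>
lemma skeleton_trivial_act_thin:
  assumes t: "skeleton_trivial N t" and \<alpha>: "mono_map p N \<alpha>" and p: "1 \<le> p"
  shows "Act X N p \<alpha> t \<in> Thin X p"
proof (cases "n \<le> p")
  case True
  then show ?thesis
    using thin_from_dim act_in_Simp[OF simplicial \<alpha> skeleton_trivial_in_Simp[OF t]] by blast
next
  case False
  have "card (\<alpha> ` {..p}) \<le> card {..p}"
    by (rule card_image_le) simp
  with False have "Act X N p \<alpha> t = pt p"
    by (intro skeleton_trivialD[OF t \<alpha>]) simp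
  then show ?thesis
    using pt_thin[OF p] by simp
qed

lemma smap_horn_map:
  assumes y: "is_horn X L k y" and k: "k \<le> Suc (Suc L)"
    and triv: "\<And>c. c \<le> Suc (Suc L) \<Longrightarrow> c \<noteq> k \<Longrightarrow> skeleton_trivial (Suc L) (y c)"
  shows "smap (Lambda_k k (Suc (Suc L))) X (horn_map X L k y)"
  unfolding smap_def Lambda_k_def dstd_def
proof (simp only: sset.simps, intro conjI allI impI horn_map_in_Simp[OF simplicial y]
    horn_map_natural[OF simplicial y])
  fix p \<alpha> assume \<alpha>: "\<alpha> \<in> horn_simp k (Suc (Suc L)) p \<inter> thin_k k (Suc (Suc L)) p"
  then obtain v where v: "mono_map p (Suc (Suc L)) \<alpha>" "v \<le> Suc (Suc L)" "v \<noteq> k" "v \<notin> \<alpha> ` {..p}"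
    using horn_simp_missing_vertex by blast
  have "p \<noteq> 0"
  proof
    assume "p = 0"
    with \<alpha> thin_k_vertices_empty[OF k] show False by auto
  qed
  then show "horn_map X L k y p \<alpha> \<in> Thin X p"
    unfolding horn_map_eq[OF simplicial y v]
    by (intro skeleton_trivial_act_thin[OF triv[OF v(2,3)] mono_map_drop_vertex[OF v(1,2,4)]]) simp
qed

lemma horn_filler:
  assumes y: "is_horn X L k y" and k: "k \<le> Suc (Suc L)"
    and triv: "\<And>c. c \<le> Suc (Suc L) \<Longrightarrow> c \<noteq> k \<Longrightarrow> skeleton_trivial (Suc L) (y c)"
  obtains z where "z \<in> Simp X (Suc (Suc L))"
    and "\<And>c. c \<le> Suc (Suc L) \<Longrightarrow> c \<noteq> k \<Longrightarrow> face X (Suc L) c z = y c"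
proof -
  obtain g where g: "smap (Delta_k k (Suc (Suc L))) X g"
    and ext: "\<And>p \<alpha>. \<alpha> \<in> horn_simp k (Suc (Suc L)) p \<Longrightarrow> g p \<alpha> = horn_map X L k y p \<alpha>"
    using horn_lifting[OF _ k] smap_horn_map[OF y k triv] unfolding rlp_def Lambda_k_def dstd_def by auto
  define z where "z = g (Suc (Suc L)) (did (Suc (Suc L)))"
  have "z \<in> Simp X (Suc (Suc L))"
    using g did_in_dsimp unfolding z_def smap_def Delta_k_def dstd_def by auto
  moreover have "face X (Suc L) c z = y c" if c: "c \<le> Suc (Suc L)" "c \<noteq> k" for c
  proof -
    let ?\<phi> = "dsimp_of (Suc L) (face_map c)"
    have miss: "c \<notin> ?\<phi> ` {..Suc L}"
      unfolding dsimp_of_def face_map_def by auto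
    have "face X (Suc L) c z = g (Suc L) ?\<phi>"
      using smap_standard_simplex[OF simplicial g[unfolded Delta_k_def] mono_map_face_map[of "Suc L" c]]
      unfolding face_def z_def by simp
    also have "\<dots> = horn_map X L k y (Suc L) ?\<phi>"
      by (rule ext) (use dsimp_of_in_dsimp[OF mono_map_face_map] c miss in \<open>auto simp: horn_simp_def\<close>)
    also have "\<dots> = Act X (Suc L) (Suc L) (drop_vertex c ?\<phi>) (y c)"
      using dsimp_of_in_dsimp[OF mono_map_face_map] c miss
      by (intro horn_map_eq[OF simplicial y]) (auto simp: dsimp_def)
    also have "\<dots> = y c"
      using triv[OF c] skeleton_trivial_in_Simp
      by (intro act_ident[OF simplicial]) (auto simp: drop_vertex_def dsimp_of_def face_map_def)
    finally show ?thesis .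
  qed
  ultimately show ?thesis using that by blast
qed

lemma horn_fill:
  assumes dim: "n \<le> Suc L" and y: "is_horn X L k y" and k: "k \<le> Suc (Suc L)"
    and triv: "\<And>c. c \<le> Suc (Suc L) \<Longrightarrow> c \<noteq> k \<Longrightarrow> skeleton_trivial (Suc L) (y c)"
  obtains z where "skeleton_trivial (Suc (Suc L)) z"
    and "\<And>c. c \<le> Suc (Suc L) \<Longrightarrow> c \<noteq> k \<Longrightarrow> face X (Suc L) c z = y c"
proof -
  obtain z where z: "z \<in> Simp X (Suc (Suc L))"
    and faces: "\<And>c. c \<le> Suc (Suc L) \<Longrightarrow> c \<noteq> k \<Longrightarrow> face X (Suc L) c z = y c"
    using horn_filler[OF y k triv] by blast
  have "skeleton_trivial (Suc (Suc L)) z"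
    using dim triv faces by (intro skeleton_trivial_from_faces_except[OF z, where k = k]) auto
  with faces show ?thesis using that by blast
qed

lemma horn_fill_pattern:
  assumes dim: "n \<le> Suc L" and k: "k \<le> Suc (Suc L)"
    and triv: "\<And>c. c \<le> Suc (Suc L) \<Longrightarrow> c \<noteq> k \<Longrightarrow> skeleton_trivial (Suc L) (y c)"
    and faces: "\<And>c q. c \<le> Suc (Suc L) \<Longrightarrow> c \<noteq> k \<Longrightarrow> q \<le> Suc L \<Longrightarrow> face X L q (y c) = face_pattern F c q"
  obtains z where "skeleton_trivial (Suc (Suc L)) z"
    and "\<And>c. c \<le> Suc (Suc L) \<Longrightarrow> c \<noteq> k \<Longrightarrow> face X (Suc L) c z = y c"
    and "\<And>q. q \<le> Suc L \<Longrightarrow> face X L q (face X (Suc L) k z) = face_pattern F k q"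
proof -
  have horn: "is_horn X L k y"
    unfolding is_horn_def using triv skeleton_trivial_in_Simp faces by (auto simp: face_pattern_def)
  obtain z where z: "skeleton_trivial (Suc (Suc L)) z"
    and zf: "\<And>c. c \<le> Suc (Suc L) \<Longrightarrow> c \<noteq> k \<Longrightarrow> face X (Suc L) c z = y c"
    by (rule horn_fill[where y = y, OF dim horn k]) (use triv in auto)
  have zS: "z \<in> Simp X (Suc (Suc L))"
    using skeleton_trivial_in_Simp[OF z] .
  have "face X L q (face X (Suc L) k z) = face_pattern F k q" if q: "q \<le> Suc L" for q
  proof (cases "q < k")
    case True
    then have "face X L q (face X (Suc L) k z) = face X L (k - 1) (y q)"
      using face_face[OF simplicial True zS] zf q k by simp
    then show ?thesis
      using faces[of q "k - 1"] True q k by (auto simp: face_pattern_def)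
  next
    case False
    then have "face X L q (face X (Suc L) k z) = face X L k (y (Suc q))"
      using face_face[OF simplicial _ zS, of k "Suc q"] zf q by simp
    then show ?thesis
      using faces[of "Suc q" k] False q by (auto simp: face_pattern_def)
  qed
  with z zf show ?thesis using that by blast
qed

section \<open>The tetrahedron rule\<close>

definition witness :: "nat \<Rightarrow> 'a \<Rightarrow> 'a \<Rightarrow> 'a \<Rightarrow> 'a \<Rightarrow> bool" where
  "witness p t u v w \<longleftrightarrow> skeleton_trivial (Suc n) t \<and>
     (\<forall>q \<le> Suc n. face X n q t =
        (if q = p then u else if q = Suc p then v else if q = Suc (Suc p) then w else pt n))"

abbreviation related :: "nat \<Rightarrow> 'a \<Rightarrow> 'a \<Rightarrow> 'a \<Rightarrow> bool" where
  "related p u v w \<equiv> \<exists>t. witness p t u v w"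

lemma witness_skeleton_trivial: "witness p t u v w \<Longrightarrow> skeleton_trivial (Suc n) t"
  unfolding witness_def by simp

lemma witness_faces_skeleton_trivial:
  assumes "witness p t u v w" "Suc p \<le> n"
  shows "skeleton_trivial n u" "skeleton_trivial n v" "skeleton_trivial n w"
proof -
  have "face X n p t = u" "face X n (Suc p) t = v" "face X n (Suc (Suc p)) t = w"
    using assms unfolding witness_def by auto
  then show "skeleton_trivial n u" "skeleton_trivial n v" "skeleton_trivial n w"
    using skeleton_trivial_face[OF witness_skeleton_trivial[OF assms(1)]] by metis+
qed

lemma witness_shift: "witness p t (pt n) v w \<longleftrightarrow> witness (Suc p) t v w (pt n)"
proof -
  have "(if q = p then pt n else if q = Suc p then v else if q = Suc (Suc p) then w else pt n) =
        (if q = Suc p then v else if q = Suc (Suc p) then w else if q = Suc (Suc (Suc p)) then pt n else pt n)"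
    for q
    by simp
  then show ?thesis
    unfolding witness_def by simp
qed

text \<open>Of the faces p, ..., p+3 of a skeleton-trivial (n+2)-simplex, any three determine the fourth:
  fill the horn they form.\<close>
lemma tetrahedron:
  assumes p: "Suc p \<le> n" and k: "k \<le> 3"
    and faces: "\<forall>c \<le> 3. c \<noteq> k \<longrightarrow>
      related p (face_pattern e c 0) (face_pattern e c 1) (face_pattern e c 2)"
  shows "related p (face_pattern e k 0) (face_pattern e k 1) (face_pattern e k 2)"
proof -
  obtain W where W: "\<And>c. c \<le> 3 \<Longrightarrow> c \<noteq> k \<Longrightarrow>
      witness p (W c) (face_pattern e c 0) (face_pattern e c 1) (face_pattern e c 2)"
    using faces by metis
  define F where "F = (\<lambda>i j. if p \<le> i \<and> j \<le> p + 3 then e (i - p) (j - p) else pt n)"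
  define y where "y c = (if p \<le> c \<and> c \<le> p + 3 then W (c - p) else pt (Suc n))" for c
  have y: "skeleton_trivial (Suc n) (y c) \<and> (\<forall>q \<le> Suc n. face X n q (y c) = face_pattern F c q)"
    if c: "c \<le> Suc (Suc n)" "c \<noteq> p + k" for c
  proof (cases "p \<le> c \<and> c \<le> p + 3")
    case True
    then obtain c' where c': "c = p + c'" "c' \<le> 3" "c' \<noteq> k"
      using c by (metis add_le_cancel_left le_add_diff_inverse)
    then have "witness p (y c) (face_pattern e c' 0) (face_pattern e c' 1) (face_pattern e c' 2)"
      using W unfolding y_def by simp
    then show ?thesis
      unfolding witness_def F_def c'(1) face_pattern_shift[OF c'(2), symmetric] by simp
  next
    case False
    then show ?thesis
      unfolding y_def F_def face_pattern_def by (auto simp: skeleton_trivial_pt face_pt)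
  qed
  have pk: "p + k \<le> Suc (Suc n)"
    using p k by simp
  obtain z where z: "skeleton_trivial (Suc (Suc n)) z"
    and zf: "\<And>q. q \<le> Suc n \<Longrightarrow> face X n q (face X (Suc n) (p + k) z) = face_pattern F (p + k) q"
    by (rule horn_fill_pattern[where L = n and y = y and F = F, OF _ pk]) (use y in auto)
  have "face X n q (face X (Suc n) (p + k) z) = (if q = p then face_pattern e k 0
      else if q = Suc p then face_pattern e k 1 else if q = Suc (Suc p) then face_pattern e k 2 else pt n)"
    if "q \<le> Suc n" for q
    using zf[OF that] face_pattern_shift[OF k, where e = e and p = p and d = "pt n"] unfolding F_def by simp
  then have "witness p (face X (Suc n) (p + k) z) (face_pattern e k 0) (face_pattern e k 1) (face_pattern e k 2)"
    unfolding witness_def using skeleton_trivial_face[OF z] by simp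
  then show ?thesis by blast
qed

lemma tetrahedron_1:
  assumes "Suc p \<le> n" "related p A B C" "related p B D F" "related p C E F"
  shows "related p A D E"
  using tetrahedron[OF assms(1), of 1 "tetra_edges A B C D E F"] assms(2-)
  unfolding nat_le_3_iff by (auto simp: face_pattern_def tetra_edges_def)

lemma tetrahedron_2:
  assumes "Suc p \<le> n" "related p A B C" "related p A D E" "related p C E F"
  shows "related p B D F"
  using tetrahedron[OF assms(1), of 2 "tetra_edges A B C D E F"] assms(2-)
  unfolding nat_le_3_iff by (auto simp: face_pattern_def tetra_edges_def)

lemma tetrahedron_3:
  assumes "Suc p \<le> n" "related p A B C" "related p A D E" "related p B D F"
  shows "related p C E F"
  using tetrahedron[OF assms(1), of 3 "tetra_edges A B C D E F"] assms(2-)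
  unfolding nat_le_3_iff by (auto simp: face_pattern_def tetra_edges_def)

lemma degeneracy_witness:
  assumes u: "skeleton_trivial n u" and j: "j \<le> n"
  obtains t where "skeleton_trivial (Suc n) t"
    and "\<And>q. q \<le> Suc n \<Longrightarrow> face X n q t = (if q = j \<or> q = Suc j then u else pt n)"
proof -
  have \<sigma>: "mono_map (Suc n) n (codegen n j)"
    using codegen_in_dsimp[OF j] unfolding dsimp_def by simp
  have uS: "u \<in> Simp X n"
    by (rule skeleton_trivial_in_Simp[OF u])
  define t where "t = Act X n (Suc n) (codegen n j) u"
  have "face X n q t = (if q = j \<or> q = Suc j then u else pt n)" if q: "q \<le> Suc n" for q
  proof -
    have "face X n q t = Act X n n (codegen n j \<circ> face_map q) u"
      unfolding face_def t_def by (rule act_act[OF simplicial \<sigma> mono_map_face_map uS])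
    moreover have "Act X n n (codegen n j \<circ> face_map q) u = u" if "q = j \<or> q = Suc j"
      using that by (intro act_ident[OF simplicial uS]) (simp add: codegen_face_map_adjacent)
    moreover have "Act X n n (codegen n j \<circ> face_map q) u = pt n" if ne: "q \<noteq> j" "q \<noteq> Suc j"
    proof -
      obtain v where "v \<le> n" "v \<notin> (\<lambda>i. codegen n j (face_map q i)) ` {..n}"
        using codegen_face_map_other[OF j q ne] by blast
      then show ?thesis
        using skeleton_trivial_missing_vertex[OF u mono_map_comp[OF \<sigma> mono_map_face_map]]
        by (simp add: comp_def)
    qed
    ultimately show ?thesis by auto
  qed
  moreover have "skeleton_trivial (Suc n) t"
    unfolding t_def by (rule skeleton_trivial_act[OF u \<sigma>])
  ultimately show ?thesis
    using that by blast
qed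

lemma related_degenerate_left: "skeleton_trivial n u \<Longrightarrow> Suc p \<le> n \<Longrightarrow> related p u u (pt n)"
  by (rule degeneracy_witness[of u p]) (auto simp: witness_def)

lemma related_degenerate_right: "skeleton_trivial n u \<Longrightarrow> Suc p \<le> n \<Longrightarrow> related p (pt n) u u"
  by (rule degeneracy_witness[of u "Suc p"]) (auto simp: witness_def)

lemma related_rotate:
  assumes p: "Suc p \<le> n" and r: "related p u v (pt n)"
  shows "related p (pt n) v u"
proof -
  have u: "skeleton_trivial n u"
    using r witness_faces_skeleton_trivial[OF _ p] by blast
  show ?thesis
    by (rule tetrahedron_1[OF p related_degenerate_right[OF u p] r related_degenerate_left[OF u p]])
qed

lemma related_unrotate:
  assumes p: "Suc p \<le> n" and r: "related p (pt n) v u"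
  shows "related p u v (pt n)"
proof -
  have u: "skeleton_trivial n u"
    using r witness_faces_skeleton_trivial[OF _ p] by blast
  show ?thesis
    by (rule tetrahedron_2[OF p related_degenerate_right[OF u p] r related_degenerate_left[OF u p]])
qed

section \<open>Homotopy and composition\<close>

definition homotopic :: "'a \<Rightarrow> 'a \<Rightarrow> bool" where
  "homotopic u v \<longleftrightarrow> related (n - 1) (pt n) u v"

lemma homotopic_skeleton_trivial: "homotopic u v \<Longrightarrow> skeleton_trivial n u \<and> skeleton_trivial n v"
  unfolding homotopic_def using witness_faces_skeleton_trivial[OF _ Suc_pred_dim_le] by blast

lemma homotopic_refl: "skeleton_trivial n u \<Longrightarrow> homotopic u u"
  unfolding homotopic_def using related_degenerate_right Suc_pred_dim by simp

lemma homotopic_euclidean: "homotopic u v \<Longrightarrow> homotopic u w \<Longrightarrow> homotopic v w"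
  unfolding homotopic_def
  using tetrahedron_3[where A = "pt n" and B = "pt n" and C = "pt n" and D = u and E = v and F = w] Suc_pred_dim
    related_degenerate_left[OF skeleton_trivial_pt] by simp

lemma homotopic_sym: "homotopic u v \<Longrightarrow> homotopic v u"
  using homotopic_euclidean homotopic_refl homotopic_skeleton_trivial by blast

lemma homotopic_trans [trans]: "homotopic u v \<Longrightarrow> homotopic v w \<Longrightarrow> homotopic u w"
  using homotopic_euclidean homotopic_sym by blast

lemma related_imp_homotopic: "Suc j \<le> n \<Longrightarrow> related j u v (pt n) \<Longrightarrow> homotopic u v"
proof (induction "n - Suc j" arbitrary: j u v)
  case 0
  then have "j = n - 1" by simp
  with 0 related_rotate have "homotopic v u"
    unfolding homotopic_def by blast
  then show ?case by (rule homotopic_sym)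
next
  case (Suc d)
  then have "related (Suc j) v u (pt n)"
    using related_rotate witness_shift by blast
  moreover have "d = n - Suc (Suc j)" "Suc (Suc j) \<le> n"
    using Suc.hyps(2) by arith+
  ultimately have "homotopic v u"
    using Suc.hyps(1) by blast
  then show ?case by (rule homotopic_sym)
qed

lemma homotopic_imp_related: "homotopic u v \<Longrightarrow> related (n - 1) v u (pt n)"
  unfolding homotopic_def using related_unrotate Suc_pred_dim by simp

definition composite :: "'a \<Rightarrow> 'a \<Rightarrow> 'a \<Rightarrow> bool" where
  "composite a b r \<longleftrightarrow> related (n - 1) a r b"

lemma composite_cong_left: "homotopic a a' \<Longrightarrow> composite a b r \<Longrightarrow> composite a' b r' \<Longrightarrow> homotopic r r'"
  unfolding composite_def homotopic_def
  using tetrahedron_1[where A = "pt n" and B = a and C = a' and D = r and E = r' and F = b] Suc_pred_dim by simp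

lemma composite_cong_right:
  assumes "homotopic b b'" "composite a b r" "composite a b' r'"
  shows "homotopic r r'"
proof -
  have "related (n - 1) r r' (pt n)"
    using tetrahedron_2[OF Suc_pred_dim_le, where A = a and B = r and C = b and D = r' and E = b' and F = "pt n"]
      assms homotopic_imp_related[OF homotopic_sym] unfolding composite_def by blast
  then show ?thesis
    by (rule related_imp_homotopic[OF Suc_pred_dim_le])
qed

lemma composite_assoc: "composite a b ab \<Longrightarrow> composite ab c abc \<Longrightarrow> composite b c bc \<Longrightarrow> composite a bc abc"
  unfolding composite_def using tetrahedron_1[where A = a and B = ab and C = b and D = abc and E = bc and F = c] Suc_pred_dim by simp

lemma composite_pt_left: "composite (pt n) a r \<Longrightarrow> homotopic r a"
  unfolding composite_def homotopic_def by simp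

lemma composite_exists:
  assumes a: "skeleton_trivial n a" and b: "skeleton_trivial n b"
  obtains t where "witness (n - 1) t a (face X n n t) b"
proof -
  obtain L where L: "n = Suc L"
    using dim_pos by (cases n) auto
  define y where "y c = (if c = L then a else if c = Suc (Suc L) then b else pt (Suc L))" for c
  obtain z where z: "skeleton_trivial (Suc (Suc L)) z"
    and zf: "\<And>c. c \<le> Suc (Suc L) \<Longrightarrow> c \<noteq> Suc L \<Longrightarrow> face X (Suc L) c z = y c"
  proof (rule horn_fill_pattern[where L = L and k = "Suc L" and y = y and F = "\<lambda>i j. pt L"])
    show "skeleton_trivial (Suc L) (y c)" for c
      using a b skeleton_trivial_pt unfolding y_def L by auto
    show "face X L q (y c) = face_pattern (\<lambda>i j. pt L) c q" for c q
      using skeleton_trivial_face_pt[OF a L] skeleton_trivial_face_pt[OF b L] face_pt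
      unfolding y_def face_pattern_def by auto
  qed (use L that in auto)
  have "witness (n - 1) z a (face X n n z) b"
    unfolding witness_def using z zf L by (auto simp: y_def)
  then show ?thesis by (rule that)
qed

lemma composite_left_inverse:
  assumes a: "skeleton_trivial n a"
  shows "\<exists>b. composite b a (pt n)"
proof -
  obtain L where L: "n = Suc L"
    using dim_pos by (cases n) auto
  define y where "y c = (if c = Suc (Suc L) then a else pt (Suc L))" for c
  obtain z where z: "skeleton_trivial (Suc (Suc L)) z"
    and zf: "\<And>c. c \<le> Suc (Suc L) \<Longrightarrow> c \<noteq> L \<Longrightarrow> face X (Suc L) c z = y c"
  proof (rule horn_fill_pattern[where L = L and k = L and y = y and F = "\<lambda>i j. pt L"])
    show "skeleton_trivial (Suc L) (y c)" for c
      using a skeleton_trivial_pt unfolding y_def L by auto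
    show "face X L q (y c) = face_pattern (\<lambda>i j. pt L) c q" for c q
      using skeleton_trivial_face_pt[OF a L] face_pt unfolding y_def face_pattern_def by auto
  qed (use L that in auto)
  have "witness (n - 1) z (face X n (n - 1) z) (pt n) a"
    unfolding witness_def using z zf L by (auto simp: y_def)
  then show ?thesis
    unfolding composite_def by blast
qed

section \<open>Homotopies as prisms\<close>

lemma smap_prism_homotopy:
  assumes t: "skeleton_trivial (Suc n) t"
  shows "smap (sprod (Delta n) (Delta_t 1)) X (\<lambda>p \<gamma>\<delta>. Act X (Suc n) p (prism_collapse n (fst \<gamma>\<delta>) (snd \<gamma>\<delta>)) t)"
  unfolding smap_def sprod_Delta_Delta_t
proof (intro conjI allI impI)
  have tS: "t \<in> Simp X (Suc n)"
    by (rule skeleton_trivial_in_Simp[OF t])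
  fix p \<gamma>\<delta> assume "\<gamma>\<delta> \<in> dsimp n p \<times> dsimp 1 p"
  then show "Act X (Suc n) p (prism_collapse n (fst \<gamma>\<delta>) (snd \<gamma>\<delta>)) t \<in> Simp X p"
    using act_in_Simp[OF simplicial mono_map_prism_collapse tS] by auto
next
  fix p \<gamma>\<delta> assume \<gamma>\<delta>: "\<gamma>\<delta> \<in> ddegen n p \<times> (ddegen 1 p \<union> (if p = 1 then {did 1} else {}))"
  then have "fst \<gamma>\<delta> \<in> dsimp n p" "snd \<gamma>\<delta> \<in> dsimp 1 p" "1 \<le> p"
    using did_in_dsimp ddegen_dim_pos unfolding ddegen_def by (auto split: if_splits)
  then show "Act X (Suc n) p (prism_collapse n (fst \<gamma>\<delta>) (snd \<gamma>\<delta>)) t \<in> Thin X p"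
    using skeleton_trivial_act_thin[OF t mono_map_prism_collapse] by blast
next
  fix P Q \<beta> \<gamma>\<delta> assume \<beta>: "mono_map Q P \<beta>" and "\<gamma>\<delta> \<in> dsimp n P \<times> dsimp 1 P"
  then have \<gamma>: "fst \<gamma>\<delta> \<in> dsimp n P" and \<delta>: "snd \<gamma>\<delta> \<in> dsimp 1 P"
    by auto
  have tS: "t \<in> Simp X (Suc n)"
    by (rule skeleton_trivial_in_Simp[OF t])
  have "Act X (Suc n) Q (prism_collapse n (dact P Q \<beta> (fst \<gamma>\<delta>)) (dact P Q \<beta> (snd \<gamma>\<delta>))) t
      = Act X (Suc n) Q (prism_collapse n (fst \<gamma>\<delta>) (snd \<gamma>\<delta>) \<circ> \<beta>) t"
    by (rule act_cong[OF simplicial mono_map_prism_collapse[OF dact_in_dsimp[OF \<gamma> \<beta>] dact_in_dsimp[OF \<delta> \<beta>]] _ tS])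
      (simp add: prism_collapse_def dact_def)
  also have "\<dots> = Act X P Q \<beta> (Act X (Suc n) P (prism_collapse n (fst \<gamma>\<delta>) (snd \<gamma>\<delta>)) t)"
    by (rule act_act[OF simplicial mono_map_prism_collapse[OF \<gamma> \<delta>] \<beta> tS, symmetric])
  finally show "Act X (Suc n) Q (prism_collapse n (fst (dact P Q \<beta> (fst \<gamma>\<delta>), dact P Q \<beta> (snd \<gamma>\<delta>)))
      (snd (dact P Q \<beta> (fst \<gamma>\<delta>), dact P Q \<beta> (snd \<gamma>\<delta>)))) t
    = Act X P Q \<beta> (Act X (Suc n) P (prism_collapse n (fst \<gamma>\<delta>) (snd \<gamma>\<delta>)) t)"
    by simp
qed

lemma prism_homotopy_bdry:
  assumes t: "witness (n - 1) t (pt n) b a" and \<gamma>: "\<gamma> \<in> bdry_simp n p" and \<delta>: "\<delta> \<in> dsimp 1 p"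
  shows "Act X (Suc n) p (prism_collapse n \<gamma> \<delta>) t = pt p"
proof -
  have tt: "skeleton_trivial (Suc n) t"
    by (rule witness_skeleton_trivial[OF t])
  obtain v where v: "v \<le> n" "v \<notin> \<gamma> ` {..p}" and \<gamma>': "\<gamma> \<in> dsimp n p"
    using \<gamma> unfolding bdry_simp_def by auto
  have \<phi>: "mono_map p (Suc n) (prism_collapse n \<gamma> \<delta>)"
    by (rule mono_map_prism_collapse[OF \<gamma>' \<delta>])
  have miss: "v \<notin> prism_collapse n \<gamma> \<delta> ` {..p}"
    using v unfolding prism_collapse_def by auto
  show ?thesis
  proof (cases "v = n")
    case True
    have "prism_collapse n \<gamma> \<delta> ` {..p} \<subseteq> {..<n}"
    proof
      fix y assume "y \<in> prism_collapse n \<gamma> \<delta> ` {..p}"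
      then obtain i where i: "i \<le> p" "y = prism_collapse n \<gamma> \<delta> i"
        by auto
      moreover have "\<gamma> i \<le> n" "\<gamma> i \<noteq> n"
        using i v True \<gamma>' unfolding dsimp_def mono_map_def by auto
      ultimately show "y \<in> {..<n}"
        unfolding prism_collapse_def by auto
    qed
    then have "card (prism_collapse n \<gamma> \<delta> ` {..p}) \<le> n"
      by (metis card_lessThan card_mono finite_lessThan)
    then show ?thesis
      by (rule skeleton_trivialD[OF tt \<phi>])
  next
    case False
    have "face X n v t = pt n"
      using t v(1) False dim_pos unfolding witness_def by auto
    then have "Act X (Suc n) p (prism_collapse n \<gamma> \<delta>) t = Act X n p (drop_vertex v (prism_collapse n \<gamma> \<delta>)) (pt n)"
      using act_through_face[OF simplicial \<phi> _ miss skeleton_trivial_in_Simp[OF tt]] v(1) by simp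
    then show ?thesis
      using act_pt[OF mono_map_drop_vertex[OF \<phi> _ miss]] v(1) by simp
  qed
qed

lemma homotopic_imp_hrel:
  assumes "homotopic b a"
  shows "hrel X x n a b"
proof -
  obtain t where t: "witness (n - 1) t (pt n) b a"
    using assms unfolding homotopic_def by blast
  have tt: "skeleton_trivial (Suc n) t"
    by (rule witness_skeleton_trivial[OF t])
  have faces: "face X n n t = b" "face X n (Suc n) t = a"
    using t dim_pos unfolding witness_def by auto
  have sphere: "a \<in> sphere_simps X x n" "b \<in> sphere_simps X x n"
    using assms homotopic_skeleton_trivial sphere_simps_iff by auto
  then have bdry: "Act X n p \<gamma> a = pt p" "Act X n p \<gamma> b = pt p" if "\<gamma> \<in> bdry_simp n p" for p \<gamma>
    using that unfolding sphere_simps_def by auto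
  let ?H = "\<lambda>p \<gamma>\<delta>. Act X (Suc n) p (prism_collapse n (fst \<gamma>\<delta>) (snd \<gamma>\<delta>)) t"
  have "homotopic_rel_bdry X n a b"
    unfolding homotopic_rel_bdry_def
  proof (intro conjI allI impI exI[of _ ?H])
    fix p \<gamma> assume "\<gamma> \<in> bdry_simp n p"
    then show "Act X n p \<gamma> a = Act X n p \<gamma> b"
      using bdry by simp
  next
    show "smap (sprod (Delta n) (Delta_t 1)) X ?H"
      by (rule smap_prism_homotopy[OF tt])
  next
    fix p \<gamma> assume "\<gamma> \<in> dsimp n p"
    then show "?H p (\<gamma>, c0 p) = Act X n p \<gamma> a" "?H p (\<gamma>, c1 p) = Act X n p \<gamma> b"
      using act_prism_collapse_c0[OF simplicial skeleton_trivial_in_Simp[OF tt]]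
        act_prism_collapse_c1[OF simplicial skeleton_trivial_in_Simp[OF tt]] faces by simp_all
  next
    fix p \<gamma> \<delta> assume "\<gamma> \<in> bdry_simp n p" "\<delta> \<in> dsimp 1 p"
    then show "?H p (\<gamma>, \<delta>) = Act X n p \<gamma> a"
      using prism_homotopy_bdry[OF t] bdry by simp
  qed
  with sphere show ?thesis
    unfolding hrel_def by simp
qed

text \<open>The prism Delta[n] \<times> Delta[1] is triangulated by the (n+1)-simplices
  (codegen n j, jump (n+1) (j+1)), j = 0, ..., n, consecutive ones sharing the n-simplex
  (did n, jump n (j+1)); the images of this chain under a homotopy H link its two ends.\<close>
context
  fixes H :: "nat \<Rightarrow> (nat \<Rightarrow> nat) \<times> (nat \<Rightarrow> nat) \<Rightarrow> 'a"
  assumes H: "smap (sprod (Delta n) (Delta_t 1)) X H"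
    and H_bdry: "\<And>p \<gamma> \<delta>. \<gamma> \<in> bdry_simp n p \<Longrightarrow> \<delta> \<in> dsimp 1 p \<Longrightarrow> H p (\<gamma>, \<delta>) = pt p"
begin

lemma prism_in_Simp: "\<gamma> \<in> dsimp n p \<Longrightarrow> \<delta> \<in> dsimp 1 p \<Longrightarrow> H p (\<gamma>, \<delta>) \<in> Simp X p"
  using H unfolding smap_def sprod_Delta_Delta_t by auto

lemma face_prism:
  assumes "\<gamma> \<in> dsimp n (Suc p)" "\<delta> \<in> dsimp 1 (Suc p)"
  shows "face X p q (H (Suc p) (\<gamma>, \<delta>)) = H p (dact (Suc p) p (face_map q) \<gamma>, dact (Suc p) p (face_map q) \<delta>)"
proof -
  have "H p (Act (sprod (Delta n) (Delta_t 1)) (Suc p) p (face_map q) (\<gamma>, \<delta>))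
      = Act X (Suc p) p (face_map q) (H (Suc p) (\<gamma>, \<delta>))"
    using H assms mono_map_face_map unfolding smap_def sprod_Delta_Delta_t(1) by blast
  then show ?thesis
    unfolding face_def sprod_Delta_Delta_t by simp
qed

lemma skeleton_trivial_prism_column: "skeleton_trivial n (H n (did n, jump n j))"
proof -
  obtain L where L: "n = Suc L"
    using dim_pos by (cases n) auto
  have "face X L q (H n (did n, jump n j)) = pt L" if "q \<le> Suc L" for q
    using face_prism[of "did n" L "jump n j" q] H_bdry[OF dact_face_map_did_bdry[OF that, folded L]] L
      did_in_dsimp jump_in_dsimp dact_in_dsimp[OF jump_in_dsimp mono_map_face_map] by simp
  then have "skeleton_trivial (Suc L) (H n (did n, jump n j))"
    using prism_in_Simp[OF did_in_dsimp jump_in_dsimp] L skeleton_trivial_pt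
    by (intro skeleton_trivial_from_faces) auto
  then show ?thesis
    using L by simp
qed

lemma face_prism_simplex:
  assumes j: "j \<le> n" and q: "q \<le> Suc n"
  shows "face X n q (H (Suc n) (codegen n j, jump (Suc n) (Suc j))) =
    (if q = j then H n (did n, jump n j) else if q = Suc j then H n (did n, jump n (Suc j)) else pt n)"
proof -
  have "face X n q (H (Suc n) (codegen n j, jump (Suc n) (Suc j))) =
      H n (dact (Suc n) n (face_map q) (codegen n j), jump n (if q \<le> j then j else Suc j))"
    using face_prism[OF codegen_in_dsimp[OF j] jump_in_dsimp] dact_face_map_jump by simp
  then show ?thesis
    using dact_face_map_codegen_adjacent[of q j n] H_bdry[OF dact_face_map_codegen_bdry[OF j q] jump_in_dsimp]
    by auto
qed

lemma homotopic_prism_ends: "homotopic (H n (did n, jump n 0)) (H n (did n, jump n (Suc n)))"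
proof -
  let ?u = "\<lambda>j. H n (did n, jump n j)" and ?t = "\<lambda>j. H (Suc n) (codegen n j, jump (Suc n) (Suc j))"
  have t: "skeleton_trivial (Suc n) (?t j)" if "j \<le> n" for j
    using that prism_in_Simp[OF codegen_in_dsimp jump_in_dsimp] face_prism_simplex
      skeleton_trivial_prism_column skeleton_trivial_pt
    by (intro skeleton_trivial_from_faces) auto
  have step: "homotopic (?u j) (?u (Suc j))" if j: "j \<le> n" for j
  proof (cases "j < n")
    case True
    then have "witness j (?t j) (?u j) (?u (Suc j)) (pt n)"
      unfolding witness_def using t[OF j] face_prism_simplex[OF j] by auto
    then show ?thesis
      using related_imp_homotopic True by (metis Suc_leI)
  next
    case False
    then have "witness (n - 1) (?t j) (pt n) (?u j) (?u (Suc j))"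
      unfolding witness_def using t[OF j] face_prism_simplex[OF j] j dim_pos by auto
    then show ?thesis
      unfolding homotopic_def by blast
  qed
  have "homotopic (?u 0) (?u j)" if "j \<le> Suc n" for j
    using that
  proof (induction j)
    case 0
    then show ?case
      using homotopic_refl skeleton_trivial_prism_column by simp
  next
    case (Suc j)
    then show ?case
      using homotopic_trans step by simp
  qed
  then show ?thesis by simp
qed

end

lemma hrel_imp_homotopic:
  assumes "hrel X x n a b"
  shows "homotopic a b"
proof -
  have sphere: "a \<in> sphere_simps X x n" "b \<in> sphere_simps X x n"
    using assms unfolding hrel_def by auto
  obtain H where H: "smap (sprod (Delta n) (Delta_t 1)) X H"
    and ends: "\<And>p \<gamma>. \<gamma> \<in> dsimp n p \<Longrightarrow> H p (\<gamma>, c0 p) = Act X n p \<gamma> a \<and> H p (\<gamma>, c1 p) = Act X n p \<gamma> b"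
    and bdry: "\<And>p \<gamma> \<delta>. \<gamma> \<in> bdry_simp n p \<Longrightarrow> \<delta> \<in> dsimp 1 p \<Longrightarrow> H p (\<gamma>, \<delta>) = Act X n p \<gamma> a"
    using assms unfolding hrel_def homotopic_rel_bdry_def by blast
  have H_bdry: "H p (\<gamma>, \<delta>) = pt p" if "\<gamma> \<in> bdry_simp n p" "\<delta> \<in> dsimp 1 p" for p \<gamma> \<delta>
    using bdry[OF that] sphere that(1) unfolding sphere_simps_def by simp
  have "H n (did n, jump n 0) = b" "H n (did n, jump n (Suc n)) = a"
    using ends[OF did_in_dsimp] act_ident[OF simplicial] sphere
    unfolding jump_0 jump_Suc sphere_simps_def did_def by auto
  then show ?thesis
    using homotopic_prism_ends[OF H H_bdry] homotopic_sym by metis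
qed

section \<open>The homotopy group\<close>

lemma smap_yon_skeleton_trivial:
  assumes t: "skeleton_trivial (Suc n) t"
  shows "smap (Delta_k n (Suc n)) X (yon X (Suc n) t)"
  unfolding Delta_k_def
proof (rule smap_yon[OF simplicial skeleton_trivial_in_Simp[OF t]])
  fix p \<alpha> assume \<alpha>: "\<alpha> \<in> thin_k n (Suc n) p"
  then have "mono_map p (Suc n) \<alpha>"
    unfolding thin_k_def ddegen_def dsimp_def by auto
  moreover have "p \<noteq> 0"
    using \<alpha> thin_k_vertices_empty[of n "Suc n"] by (metis empty_iff le_SucI le_add1 order_refl plus_1_eq_Suc)
  ultimately show "Act X (Suc n) p \<alpha> t \<in> Thin X p"
    using skeleton_trivial_act_thin[OF t] by simp
qed

lemma witness_mult_filler:
  assumes "witness (n - 1) t a r b"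
  shows "mult_filler X x n t a b \<and> face X n n t = r"
proof -
  have t: "skeleton_trivial (Suc n) t"
    by (rule witness_skeleton_trivial[OF assms])
  have "face X n q t = (if q = n - 1 then a else if q = n then r else if q = Suc n then b else pt n)"
    if "q \<le> Suc n" for q
    using assms that dim_pos unfolding witness_def by auto
  then show ?thesis
    unfolding mult_filler_def using skeleton_trivial_in_Simp[OF t] smap_yon_skeleton_trivial[OF t] dim_pos
    by auto
qed

lemma mult_filler_witness:
  assumes a: "skeleton_trivial n a" and b: "skeleton_trivial n b" and mf: "mult_filler X x n t a b"
  shows "witness (n - 1) t a (face X n n t) b"
proof -
  obtain L where L: "n = Suc L"
    using dim_pos by (cases n) auto
  have tS: "t \<in> Simp X (Suc (Suc L))"
    and fa: "face X (Suc L) L t = a" and fb: "face X (Suc L) (Suc (Suc L)) t = b"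
    and fo: "\<And>i. i \<le> Suc (Suc L) \<Longrightarrow> i \<notin> {L, Suc L, Suc (Suc L)} \<Longrightarrow> face X (Suc L) i t = pt (Suc L)"
    using mf L unfolding mult_filler_def by auto
  let ?c = "face X (Suc L) (Suc L) t"
  have "face X L q ?c = pt L" if q: "q \<le> Suc L" for q
  proof (cases "q = Suc L")
    case True
    then have "face X L q ?c = face X L (Suc L) b"
      using face_face[OF simplicial _ tS, of "Suc L" "Suc (Suc L)"] fb by simp
    then show ?thesis
      using skeleton_trivial_face_pt[OF b L] by simp
  next
    case False
    then have "face X L q ?c = face X L L (face X (Suc L) q t)"
      using face_face[OF simplicial _ tS, of q "Suc L"] q by simp
    then show ?thesis
      using fa fo[of q] q False skeleton_trivial_face_pt[OF a L] face_pt by (cases "q = L") auto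
  qed
  then have c: "skeleton_trivial (Suc L) ?c"
    using face_in_Simp[OF simplicial tS] skeleton_trivial_pt L
    by (intro skeleton_trivial_from_faces) auto
  have "skeleton_trivial (Suc L) (face X (Suc L) v t)" if "v \<le> Suc (Suc L)" for v
    using a b c fa fb fo[OF that] skeleton_trivial_pt L by (cases "v \<in> {L, Suc L, Suc (Suc L)}") auto
  then have "skeleton_trivial (Suc (Suc L)) t"
    using L by (intro skeleton_trivial_from_faces[OF tS]) auto
  then show ?thesis
    unfolding witness_def using fa fb fo L by auto
qed

abbreviation cls :: "'a \<Rightarrow> 'a set" where
  "cls \<equiv> hclass X x n"

lemma equivclp_hrel_iff:
  assumes "a \<in> sphere_simps X x n"
  shows "equivclp (hrel X x n) a b \<longleftrightarrow> homotopic a b"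
proof
  assume "equivclp (hrel X x n) a b"
  then show "homotopic a b"
  proof (induction rule: equivclp_induct)
    case base
    then show ?case using homotopic_refl assms sphere_simps_iff by simp
  next
    case (step y z)
    then have "homotopic y z"
      using hrel_imp_homotopic homotopic_sym by blast
    with step.IH show ?case
      using homotopic_trans by blast
  qed
next
  assume "homotopic a b"
  then show "equivclp (hrel X x n) a b"
    using homotopic_imp_hrel homotopic_sym by blast
qed

lemma hclass_eq: "a \<in> sphere_simps X x n \<Longrightarrow> cls a = {b. homotopic a b}"
  unfolding hclass_def using equivclp_hrel_iff homotopic_skeleton_trivial sphere_simps_iff by blast

lemma hclass_eq_iff:
  assumes "a \<in> sphere_simps X x n" "a' \<in> sphere_simps X x n"
  shows "cls a = cls a' \<longleftrightarrow> homotopic a a'"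
  using assms homotopic_refl homotopic_sym homotopic_trans sphere_simps_iff
  unfolding hclass_eq[OF assms(1)] hclass_eq[OF assms(2)] by blast

lemma tau_mult_hclass:
  assumes a: "a \<in> sphere_simps X x n" and b: "b \<in> sphere_simps X x n" and r: "composite a b r"
  shows "cls a \<otimes>\<^bsub>tau X x n\<^esub> cls b = cls r"
proof -
  obtain t where t: "witness (n - 1) t a r b"
    using r unfolding composite_def by blast
  have r_sphere: "r \<in> sphere_simps X x n"
    using witness_faces_skeleton_trivial(2)[OF t] Suc_pred_dim sphere_simps_iff by simp
  define P where "P C \<longleftrightarrow> (\<exists>a'\<in>cls a. \<exists>b'\<in>cls b. \<exists>t. mult_filler X x n t a' b' \<and> C = cls (face X n n t))"
    for C
  have "P (cls r)"
    unfolding P_def using witness_mult_filler[OF t] hclass_eq a b homotopic_refl sphere_simps_iff by blast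
  moreover have "C = cls r" if "P C" for C
  proof -
    obtain a' b' t' where a': "homotopic a a'" and b': "homotopic b b'"
      and t': "mult_filler X x n t' a' b'" and C: "C = cls (face X n n t')"
      using \<open>P C\<close> hclass_eq[OF a] hclass_eq[OF b] unfolding P_def by blast
    have triv: "skeleton_trivial n a'" "skeleton_trivial n b" "skeleton_trivial n b'"
      using a' b' homotopic_skeleton_trivial by blast+
    have r': "composite a' b' (face X n n t')"
      unfolding composite_def using mult_filler_witness[OF triv(1,3) t'] by blast
    obtain s where s: "witness (n - 1) s a' (face X n n s) b"
      using composite_exists[OF triv(1,2)] .
    have "homotopic r (face X n n s)"
      using composite_cong_left[OF a' r] s unfolding composite_def by blast
    also have "homotopic \<dots> (face X n n t')"
      using composite_cong_right[OF b' _ r'] s unfolding composite_def by blast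
    finally have "homotopic r (face X n n t')" .
    then show ?thesis
      unfolding C using hclass_eq_iff[OF r_sphere] homotopic_skeleton_trivial sphere_simps_iff by blast
  qed
  ultimately have "(SOME C. P C) = cls r"
    by (rule some_equality)
  then show ?thesis
    unfolding tau_def P_def by simp
qed

lemma composite_in_sphere:
  assumes "a \<in> sphere_simps X x n" "b \<in> sphere_simps X x n"
  obtains r where "r \<in> sphere_simps X x n" "composite a b r"
proof -
  obtain t where t: "witness (n - 1) t a (face X n n t) b"
    using composite_exists assms sphere_simps_iff by blast
  then have "face X n n t \<in> sphere_simps X x n"
    using witness_faces_skeleton_trivial(2) Suc_pred_dim sphere_simps_iff by simp
  with t show ?thesis
    using that unfolding composite_def by blast
qed

lemma tau_carrier: "carrier (tau X x n) = cls ` sphere_simps X x n"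
  unfolding tau_def by simp

lemma tau_one: "\<one>\<^bsub>tau X x n\<^esub> = cls (pt n)"
  unfolding tau_def by simp

lemma pt_in_sphere_simps: "pt n \<in> sphere_simps X x n"
  using skeleton_trivial_pt sphere_simps_iff by simp

lemma tau_assoc_hclass:
  assumes a: "a \<in> sphere_simps X x n" and b: "b \<in> sphere_simps X x n" and c: "c \<in> sphere_simps X x n"
  shows "cls a \<otimes>\<^bsub>tau X x n\<^esub> cls b \<otimes>\<^bsub>tau X x n\<^esub> cls c = cls a \<otimes>\<^bsub>tau X x n\<^esub> (cls b \<otimes>\<^bsub>tau X x n\<^esub> cls c)"
proof -
  obtain ab where ab: "ab \<in> sphere_simps X x n" "composite a b ab"
    using composite_in_sphere[OF a b] .
  obtain abc where abc: "abc \<in> sphere_simps X x n" "composite ab c abc"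
    using composite_in_sphere[OF ab(1) c] .
  obtain bc where bc: "bc \<in> sphere_simps X x n" "composite b c bc"
    using composite_in_sphere[OF b c] .
  have "cls a \<otimes>\<^bsub>tau X x n\<^esub> cls bc = cls abc"
    by (rule tau_mult_hclass[OF a bc(1) composite_assoc[OF ab(2) abc(2) bc(2)]])
  then show ?thesis
    unfolding tau_mult_hclass[OF a b ab(2)] tau_mult_hclass[OF ab(1) c abc(2)] tau_mult_hclass[OF b c bc(2)] ..
qed

lemma tau_left_unit_hclass:
  assumes a: "a \<in> sphere_simps X x n"
  shows "\<one>\<^bsub>tau X x n\<^esub> \<otimes>\<^bsub>tau X x n\<^esub> cls a = cls a"
proof -
  obtain r where r: "r \<in> sphere_simps X x n" "composite (pt n) a r"
    using composite_in_sphere[OF pt_in_sphere_simps a] .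
  then show ?thesis
    unfolding tau_one tau_mult_hclass[OF pt_in_sphere_simps a r(2)]
    using hclass_eq_iff[OF r(1) a] composite_pt_left by blast
qed

lemma tau_left_inverse_hclass:
  assumes a: "a \<in> sphere_simps X x n"
  shows "\<exists>b \<in> sphere_simps X x n. cls b \<otimes>\<^bsub>tau X x n\<^esub> cls a = \<one>\<^bsub>tau X x n\<^esub>"
proof -
  obtain b where b: "composite b a (pt n)"
    using composite_left_inverse a sphere_simps_iff by blast
  then have "b \<in> sphere_simps X x n"
    using witness_faces_skeleton_trivial(1)[OF _ Suc_pred_dim_le] sphere_simps_iff
    unfolding composite_def by blast
  with b show ?thesis
    unfolding tau_one using tau_mult_hclass[OF _ a b] by blast
qed

lemma tau_group: "group (tau X x n)"
proof (rule groupI)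
  show "\<one>\<^bsub>tau X x n\<^esub> \<in> carrier (tau X x n)"
    unfolding tau_carrier tau_one using pt_in_sphere_simps by simp
next
  fix A B assume "A \<in> carrier (tau X x n)" "B \<in> carrier (tau X x n)"
  then obtain a b where a: "a \<in> sphere_simps X x n" "A = cls a" and b: "b \<in> sphere_simps X x n" "B = cls b"
    unfolding tau_carrier by blast
  obtain r where r: "r \<in> sphere_simps X x n" "composite a b r"
    using composite_in_sphere[OF a(1) b(1)] .
  then show "A \<otimes>\<^bsub>tau X x n\<^esub> B \<in> carrier (tau X x n)"
    unfolding a(2) b(2) tau_mult_hclass[OF a(1) b(1) r(2)] tau_carrier by simp
next
  fix A B C assume "A \<in> carrier (tau X x n)" "B \<in> carrier (tau X x n)" "C \<in> carrier (tau X x n)"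
  then obtain a b c where "a \<in> sphere_simps X x n" "b \<in> sphere_simps X x n" "c \<in> sphere_simps X x n"
    and "A = cls a" "B = cls b" "C = cls c"
    unfolding tau_carrier by blast
  then show "A \<otimes>\<^bsub>tau X x n\<^esub> B \<otimes>\<^bsub>tau X x n\<^esub> C = A \<otimes>\<^bsub>tau X x n\<^esub> (B \<otimes>\<^bsub>tau X x n\<^esub> C)"
    using tau_assoc_hclass by simp
next
  fix A assume "A \<in> carrier (tau X x n)"
  then obtain a where "a \<in> sphere_simps X x n" "A = cls a"
    unfolding tau_carrier by blast
  then show "\<one>\<^bsub>tau X x n\<^esub> \<otimes>\<^bsub>tau X x n\<^esub> A = A"
    using tau_left_unit_hclass by simp
next
  fix A assume "A \<in> carrier (tau X x n)"
  then obtain a where "a \<in> sphere_simps X x n" "A = cls a"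
    unfolding tau_carrier by blast
  then show "\<exists>B\<in>carrier (tau X x n). B \<otimes>\<^bsub>tau X x n\<^esub> A = \<one>\<^bsub>tau X x n\<^esub>"
    using tau_left_inverse_hclass unfolding tau_carrier by blast
qed

end

theorem mainTheorem6:
  fixes X :: "'a sset" and x :: 'a and m :: nat
  assumes "1 \<le> m"
    and "weak_complicial X"
    and "\<forall>k\<ge>m. Simp X k \<subseteq> Thin X k"
    and "x \<in> Simp X 0"
  shows "\<forall>n\<ge>m. group (tau X x n)"
proof (intro allI impI)
  fix n assume "m \<le> n"
  then interpret thin_above X x n
    using assms by unfold_locales (auto simp: weak_complicial_def)
  show "group (tau X x n)"
    by (rule tau_group)
qed

end
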